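(* Let $1\leq p<\infty$, let $\kappa$ be a cardinal, and let $(X,\Sigma,\nu)$ be a relatively nonatomic measure space that admits a $\kappa$-separable partition. Then $L^{p}(\nu)$ is isometrically isomorphic to $\ell^{p}(\kappa,L^{p}[0,1])$.
   Context: An atom of $(X,\Sigma,\nu)$ is a set $A\in\Sigma$ with $\nu(A)>0$ such that every measurable $B\subset A$ has $\nu(B)\in\{0,\nu(A)\}$; the space is purely nonatomic if it has no atoms. $(X,\Sigma,\nu)$ is relatively nonatomic if for every $\sigma$-finite $E\in\Sigma$, the restricted space $(E,\{B\cap E:B\in\Sigma\},\nu)$ is purely nonatomic. A measurable set $Y$ is called separable if $L^p(Y,\nu)$ (restricted $\sigma$-algebra and measure) is separable for $1\le p<\infty$. A family $\{X_i: i\in J\}\subset\Sigma$ of $\sigma$-finite separable sets with $\nu(X_i)>0$ is a $\kappa$-separable partition if $|J|=\kappa$, $\nu(X_i\cap X_j)=0$ for distinct $i,j\in J$, and for every $E\in\Sigma$ with $\nu(E)<\infty$ one has $\nu(E)=\sum_{i\in J}\nu(E\cap X_i)$. For a cardinal $\kappa$ and Banach space $Z$, $\ell^{p}(\kappa,Z)$ is the space of families $(z_j)_{j\in J}$, $|J|=\kappa$, with $\sum_j\|z_j\|^p<\infty$ and norm $(\sum_j\|z_j\|^p)^{1/p}$. *)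

theory Defs
  imports "HOL-Analysis.Analysis"
begin

definition is_atom :: "'a measure \<Rightarrow> 'a set \<Rightarrow> bool" where
  "is_atom M A \<longleftrightarrow> A \<in> sets M \<and> emeasure M A > 0 \<and>
     (\<forall>B\<in>sets M. B \<subseteq> A \<longrightarrow> emeasure M B = 0 \<or> emeasure M B = emeasure M A)"

definition purely_nonatomic :: "'a measure \<Rightarrow> bool" where
  "purely_nonatomic M \<longleftrightarrow> (\<nexists>A. is_atom M A)"

definition sigma_finite_set :: "'a measure \<Rightarrow> 'a set \<Rightarrow> bool" where
  "sigma_finite_set M E \<longleftrightarrow> E \<in> sets M \<and>
     (\<exists>A :: nat \<Rightarrow> 'a set. range A \<subseteq> sets M \<and> \<Union>(range A) = E \<and>
        (\<forall>n. emeasure M (A n) < \<infinity>))"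

definition relatively_nonatomic :: "'a measure \<Rightarrow> bool" where
  "relatively_nonatomic M \<longleftrightarrow>
     (\<forall>E\<in>sets M. sigma_finite_set M E \<longrightarrow> purely_nonatomic (restrict_space M E))"

definition Lp_fun :: "'a measure \<Rightarrow> real \<Rightarrow> ('a \<Rightarrow> real) set" where
  "Lp_fun M p = {f. f \<in> borel_measurable M \<and> integrable M (\<lambda>x. \<bar>f x\<bar> powr p)}"

definition Lp_norm :: "'a measure \<Rightarrow> real \<Rightarrow> ('a \<Rightarrow> real) \<Rightarrow> real" where
  "Lp_norm M p f = (\<integral>x. \<bar>f x\<bar> powr p \<partial>M) powr (1 / p)"

definition Lp_separable :: "'a measure \<Rightarrow> real \<Rightarrow> bool" where
  "Lp_separable M p \<longleftrightarrow> (\<exists>D. countable D \<and> D \<subseteq> Lp_fun M p \<and>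
     (\<forall>f\<in>Lp_fun M p. \<forall>e>0. \<exists>d\<in>D. Lp_norm M p (\<lambda>x. f x - d x) < e))"

definition separable_set :: "'a measure \<Rightarrow> 'a set \<Rightarrow> bool" where
  "separable_set M Y \<longleftrightarrow> Y \<in> sets M \<and>
     (\<forall>p::real. 1 \<le> p \<longrightarrow> Lp_separable (restrict_space M Y) p)"

text \<open>A separable partition indexed by J (kappa = card of J).\<close>
definition separable_partition :: "'a measure \<Rightarrow> 'i set \<Rightarrow> ('i \<Rightarrow> 'a set) \<Rightarrow> bool" where
  "separable_partition M J Xs \<longleftrightarrow>
     (\<forall>i\<in>J. Xs i \<in> sets M \<and> sigma_finite_set M (Xs i) \<and> separable_set M (Xs i)
            \<and> emeasure M (Xs i) > 0) \<and>
     (\<forall>i\<in>J. \<forall>j\<in>J. i \<noteq> j \<longrightarrow> emeasure M (Xs i \<inter> Xs j) = 0) \<and>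
     (\<forall>E\<in>sets M. emeasure M E < \<infinity> \<longrightarrow>
        emeasure M E = (\<Sum>\<^sub>\<infinity>i\<in>J. emeasure M (E \<inter> Xs i)))"

abbreviation L01 :: "real measure" where
  "L01 \<equiv> lebesgue_on {0..1}"

definition lp_Lp01 :: "'i set \<Rightarrow> real \<Rightarrow> ('i \<Rightarrow> real \<Rightarrow> real) set" where
  "lp_Lp01 J p = {G. (\<forall>j\<in>J. G j \<in> Lp_fun L01 p) \<and>
                     (\<lambda>j. Lp_norm L01 p (G j) powr p) summable_on J}"

definition lp_Lp01_norm :: "'i set \<Rightarrow> real \<Rightarrow> ('i \<Rightarrow> real \<Rightarrow> real) \<Rightarrow> real" where
  "lp_Lp01_norm J p G = (\<Sum>\<^sub>\<infinity>j\<in>J. Lp_norm L01 p (G j) powr p) powr (1 / p)"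

definition lp_eq :: "'i set \<Rightarrow> ('i \<Rightarrow> real \<Rightarrow> real) \<Rightarrow> ('i \<Rightarrow> real \<Rightarrow> real) \<Rightarrow> bool" where
  "lp_eq J G H \<longleftrightarrow> (\<forall>j\<in>J. AE t in L01. G j t = H j t)"

text \<open>An isometric isomorphism L^p(M) \<rightarrow> l^p(J, L^p[0,1]), given on representatives:
  linear and isometric modulo a.e. equality (hence well defined and injective on
  equivalence classes), and surjective onto the equivalence classes.\<close>
definition isometric_iso_Lp_lp :: "'a measure \<Rightarrow> 'i set \<Rightarrow> real \<Rightarrow> (('a \<Rightarrow> real) \<Rightarrow> ('i \<Rightarrow> real \<Rightarrow> real)) \<Rightarrow> bool" where
  "isometric_iso_Lp_lp M J p T \<longleftrightarrow>
     (\<forall>f\<in>Lp_fun M p. T f \<in> lp_Lp01 J p) \<and>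
     (\<forall>f\<in>Lp_fun M p. \<forall>g\<in>Lp_fun M p. \<forall>a b::real.
        lp_eq J (T (\<lambda>x. a * f x + b * g x)) (\<lambda>j t. a * T f j t + b * T g j t)) \<and>
     (\<forall>f\<in>Lp_fun M p. lp_Lp01_norm J p (T f) = Lp_norm M p f) \<and>
     (\<forall>G\<in>lp_Lp01 J p. \<exists>f\<in>Lp_fun M p. lp_eq J (T f) G)"

end

(*
  A countable dense subset of L^p(X_i)
  yields countably many sets generating the sigma-algebra modulo null sets, and writing their
  indicators as base-4 digits gives a single real function h that generates it. Passing to an
  equivalent probability measure w dN, nonatomicity makes the distribution function F of h
  continuous, so phi = F o h is uniformly distributed on [0,1] and still generates. Hence
  g |-> (g o phi) w^(1/p) is an isometric isomorphism from L^p[0,1] onto L^p(X_i).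
  Finally, p-th powers of norms add up over the partition, and a family in the l^p-sum has only
  countably many nonzero components, whose preimages can be glued to one function on X.
*)

theory Submission
  imports Defs "HOL-Probability.Probability"
begin

section \<open>Sets determined by a function modulo null sets\<close>

definition ae_preimages :: "'a measure \<Rightarrow> ('a \<Rightarrow> real) \<Rightarrow> 'a set set" where
  "ae_preimages N h =
     {A. A \<subseteq> space N \<and> (\<exists>B\<in>sets borel. AE x in N. (x \<in> A) = (h x \<in> B))}"

lemma sigma_algebra_ae_preimages: "sigma_algebra (space N) (ae_preimages N h)"
  unfolding sigma_algebra_iff2
proof (intro conjI allI ballI impI)
  show "ae_preimages N h \<subseteq> Pow (space N)" by (auto simp: ae_preimages_def)
  show "{} \<in> ae_preimages N h" unfolding ae_preimages_def by (auto intro!: bexI[of _ "{}"])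
next
  fix A assume "A \<in> ae_preimages N h"
  then obtain B where B: "B \<in> sets borel" "AE x in N. (x \<in> A) = (h x \<in> B)"
    by (auto simp: ae_preimages_def)
  have "AE x in N. (x \<in> space N - A) = (h x \<in> - B)" using B(2) AE_space by eventually_elim auto
  then show "space N - A \<in> ae_preimages N h"
    using B(1) by (auto simp: ae_preimages_def intro!: bexI[of _ "- B"])
next
  fix A :: "nat \<Rightarrow> 'a set" assume "range A \<subseteq> ae_preimages N h"
  then obtain B where B: "\<And>i. B i \<in> sets borel" "\<And>i. AE x in N. (x \<in> A i) = (h x \<in> B i)"
    and sub: "\<And>i. A i \<subseteq> space N"
    unfolding ae_preimages_def by (auto simp: image_subset_iff) metis
  have "AE x in N. \<forall>i. (x \<in> A i) = (h x \<in> B i)" using B(2) by (simp add: AE_all_countable)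
  then have "AE x in N. (x \<in> (\<Union>i. A i)) = (h x \<in> (\<Union>i. B i))" by eventually_elim auto
  then show "(\<Union>i. A i) \<in> ae_preimages N h"
    using B(1) sub by (auto simp: ae_preimages_def intro!: bexI[of _ "\<Union>i. B i"])
qed

definition ae_preimage_space :: "'a measure \<Rightarrow> ('a \<Rightarrow> real) \<Rightarrow> 'a measure" where
  "ae_preimage_space N h = measure_of (space N) (ae_preimages N h) (\<lambda>_. 0)"

lemma sets_ae_preimage_space[simp]: "sets (ae_preimage_space N h) = ae_preimages N h"
  unfolding ae_preimage_space_def
  by (rule sigma_algebra.sets_measure_of_eq[OF sigma_algebra_ae_preimages])

lemma space_ae_preimage_space[simp]: "space (ae_preimage_space N h) = space N"
  unfolding ae_preimage_space_def by (simp add: space_measure_of_conv)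

lemma ae_preimages_cong_AE:
  assumes "A \<subseteq> space N" "A' \<in> ae_preimages N h" "AE x in N. (x \<in> A) = (x \<in> A')"
  shows "A \<in> ae_preimages N h"
proof -
  obtain B where B: "B \<in> sets borel" "AE x in N. (x \<in> A') = (h x \<in> B)"
    using assms(2) by (auto simp: ae_preimages_def)
  have "AE x in N. (x \<in> A) = (h x \<in> B)" using B(2) assms(3) by eventually_elim auto
  then show ?thesis using assms(1) B(1) by (auto simp: ae_preimages_def)
qed

lemma ae_preimages_trans:
  assumes "h \<in> borel_measurable (ae_preimage_space N \<phi>)"
  shows "ae_preimages N h \<subseteq> ae_preimages N \<phi>"
proof
  fix A assume "A \<in> ae_preimages N h"
  then obtain C where C: "C \<in> sets borel" "AE x in N. (x \<in> A) = (h x \<in> C)" and A: "A \<subseteq> space N"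
    by (auto simp: ae_preimages_def)
  have "h -` C \<inter> space N \<in> ae_preimages N \<phi>"
    using measurable_sets[OF assms C(1)] by simp
  moreover have "AE x in N. (x \<in> A) = (x \<in> h -` C \<inter> space N)"
    using C(2) AE_space by eventually_elim auto
  ultimately show "A \<in> ae_preimages N \<phi>" by (rule ae_preimages_cong_AE[OF A])
qed

lemma ae_preimages_density:
  assumes [measurable]: "w \<in> borel_measurable N" and w_pos: "\<And>x. x \<in> space N \<Longrightarrow> 0 < w x"
  shows "ae_preimages (density N w) h = ae_preimages N h"
proof -
  have "(AE x in density N w. P x) \<longleftrightarrow> (AE x in N. P x)" for P
    using AE_space[of N] by (auto simp: AE_density w_pos elim: AE_mp)
  then show ?thesis by (simp add: ae_preimages_def)
qed

text \<open>The Doob--Dynkin factorization lemma, modulo null sets.\<close>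

lemma AE_eq_comp_ennreal_of_ae_preimages:
  fixes f :: "'a \<Rightarrow> ennreal"
  assumes gen: "sets N \<subseteq> ae_preimages N h" and f: "f \<in> borel_measurable N"
  shows "\<exists>g\<in>borel_measurable borel. AE x in N. f x = g (h x)"
  using f
proof (induction rule: borel_measurable_induct)
  case (cong f f')
  then obtain g where "g \<in> borel_measurable borel" "AE x in N. f' x = g (h x)" by blast
  with cong(3) show ?case by (auto elim!: AE_mp intro!: bexI[of _ g] AE_I2)
next
  case (set A)
  then obtain B where B: "B \<in> sets borel" "AE x in N. (x \<in> A) = (h x \<in> B)"
    using gen by (auto simp: ae_preimages_def)
  have "AE x in N. indicator A x = (indicator B (h x) :: ennreal)"
    using B(2) by eventually_elim (auto simp: indicator_def)
  then show ?case using B(1) by (intro bexI[of _ "indicator B"]) auto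
next
  case (mult f c)
  then obtain g where g: "g \<in> borel_measurable borel" "AE x in N. f x = g (h x)" by blast
  from g(2) have "AE x in N. c * f x = c * g (h x)" by eventually_elim auto
  then show ?case using g(1) by (intro bexI[of _ "\<lambda>t. c * g t"]) auto
next
  case (add f f')
  then obtain g g' where g: "g \<in> borel_measurable borel" "AE x in N. f x = g (h x)"
    and g': "g' \<in> borel_measurable borel" "AE x in N. f' x = g' (h x)" by blast
  from g(2) g'(2) have "AE x in N. f' x + f x = g' (h x) + g (h x)" by eventually_elim auto
  then show ?case using g(1) g'(1) by (intro bexI[of _ "\<lambda>t. g' t + g t"]) auto
next
  case (seq U)
  then obtain g where g: "\<And>i. g i \<in> borel_measurable borel" "\<And>i. AE x in N. U i x = g i (h x)"
    by metis
  have "AE x in N. \<forall>i. U i x = g i (h x)" using g(2) by (simp add: AE_all_countable)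
  then have "AE x in N. (SUP i. U i) x = (SUP i. g i (h x))" by eventually_elim (simp add: image_comp)
  then show ?case using g(1) by (intro bexI[of _ "\<lambda>t. SUP i. g i t"]) auto
qed

lemma AE_eq_comp_of_ae_preimages:
  fixes f :: "'a \<Rightarrow> real"
  assumes gen: "sets N \<subseteq> ae_preimages N h" and f: "f \<in> borel_measurable N"
  shows "\<exists>g\<in>borel_measurable borel. AE x in N. f x = g (h x)"
proof -
  obtain gpos where gpos: "gpos \<in> borel_measurable borel"
    "AE x in N. ennreal (max 0 (f x)) = gpos (h x)"
    using AE_eq_comp_ennreal_of_ae_preimages[OF gen, of "\<lambda>x. ennreal (max 0 (f x))"] f by auto
  obtain gneg where gneg: "gneg \<in> borel_measurable borel"
    "AE x in N. ennreal (max 0 (- f x)) = gneg (h x)"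
    using AE_eq_comp_ennreal_of_ae_preimages[OF gen, of "\<lambda>x. ennreal (max 0 (- f x))"] f by auto
  from gpos(2) gneg(2) have "AE x in N. f x = enn2real (gpos (h x)) - enn2real (gneg (h x))"
  proof eventually_elim
    case (elim x)
    then have "max 0 (f x) = enn2real (gpos (h x))" "max 0 (- f x) = enn2real (gneg (h x))"
      by (metis enn2real_ennreal max.cobounded1)+
    then show ?case by linarith
  qed
  then show ?thesis using gpos(1) gneg(1)
    by (intro bexI[of _ "\<lambda>t. enn2real (gpos t) - enn2real (gneg t)"]) auto
qed

text \<open>Base 4 with digits 0 and 1 keeps every tail of the expansion below 1/3, so no carries occur.\<close>

lemma base4_digit:
  fixes b :: "nat \<Rightarrow> bool"
  shows "\<lfloor>4 ^ Suc n * (\<Sum>k. of_bool (b k) * (1/4::real) ^ Suc k)\<rfloor> mod 4 = of_bool (b n)"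
proof -
  define a where "a k = of_bool (b k) * (1/4::real) ^ Suc k" for k
  have geom: "summable (\<lambda>k. (1/4::real) ^ Suc k)" by (simp add: summable_geometric)
  have a_bounds: "0 \<le> a k \<and> norm (a k) \<le> (1/4) ^ Suc k" for k by (simp add: a_def)
  have sa: "summable a" by (rule summable_comparison_test'[OF geom]) (use a_bounds in blast)
  define t where "t = (\<Sum>k. of_bool (b (k + Suc n)) * (1/4::real) ^ Suc k)"
  have "4 ^ Suc n * (\<Sum>k. a (k + Suc n)) = (\<Sum>k. 4 ^ Suc n * a (k + Suc n))"
    by (rule suminf_mult[symmetric]) (rule summable_ignore_initial_segment[OF sa])
  also have "\<dots> = t" by (simp add: t_def a_def power_add field_simps)
  finally have tail: "4 ^ Suc n * (\<Sum>k. a (k + Suc n)) = t" .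
  have st: "summable (\<lambda>k. of_bool (b (k + Suc n)) * (1/4::real) ^ Suc k)"
    by (rule summable_comparison_test'[OF geom, where N=0]) simp
  have "t \<le> (\<Sum>k. (1/4::real) ^ Suc k)" unfolding t_def by (rule suminf_le[OF _ st geom]) simp
  also have "(\<Sum>k. (1/4::real) ^ Suc k) = 1/3"
    using sums_mult[OF geometric_sums[of "1/4::real"], of "1/4"] by (simp add: sums_iff)
  finally have t_lt: "t < 1" by simp
  have t_nn: "0 \<le> t" unfolding t_def by (rule suminf_nonneg[OF st]) simp
  define I where "I = (\<Sum>k<Suc n. of_bool (b k) * 4 ^ (n - k) :: int)"
  have "4 ^ Suc n * a k = of_int (of_bool (b k) * 4 ^ (n - k))" if "k < Suc n" for k
  proof -
    have "(4::real) ^ Suc n = 4 ^ (n - k) * 4 ^ Suc k" using that by (simp flip: power_add)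
    then show ?thesis by (simp add: a_def field_simps)
  qed
  then have head: "4 ^ Suc n * (\<Sum>k<Suc n. a k) = of_int I"
    unfolding I_def of_int_sum sum_distrib_left by (intro sum.cong) auto
  have "4 ^ Suc n * (\<Sum>k. a k) = of_int I + t"
    using suminf_split_initial_segment[OF sa, of "Suc n"] tail head by (simp add: distrib_left)
  then have "\<lfloor>4 ^ Suc n * (\<Sum>k. a k)\<rfloor> = I" using t_nn t_lt by (simp add: floor_unique)
  moreover have "I = of_bool (b n) + 4 * (\<Sum>k<n. of_bool (b k) * 4 ^ (n - Suc k))"
    by (simp add: I_def sum_distrib_left mult.left_commute Suc_diff_Suc flip: power_Suc)
  ultimately show ?thesis by (simp add: a_def)
qed

lemma exists_function_coding_sets:
  fixes G :: "nat \<Rightarrow> 'a set"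
  assumes G: "\<And>n. G n \<in> sets N"
  shows "\<exists>h :: 'a \<Rightarrow> real. h \<in> borel_measurable N \<and> (\<forall>n. \<exists>B\<in>sets borel. G n = h -` B \<inter> space N)"
proof -
  define h where "h = (\<lambda>x. \<Sum>k. indicator (G k) x * (1/4::real) ^ Suc k)"
  have "\<exists>B\<in>sets borel. G n = h -` B \<inter> space N" for n
  proof -
    define B where "B = {t::real. \<lfloor>4 ^ Suc n * t\<rfloor> mod 4 = 1}"
    have "(\<lambda>t::real. \<lfloor>4 ^ Suc n * t\<rfloor> mod 4) \<in> measurable borel (count_space UNIV)"
      by measurable
    then have "B \<in> sets borel"
      unfolding B_def using measurable_sets[of _ borel "count_space UNIV" "{1::int}"]
      by (auto simp: vimage_def)
    have digit: "\<lfloor>4 ^ Suc n * h x\<rfloor> mod 4 = of_bool (x \<in> G n)" for x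
      unfolding h_def indicator_def by (rule base4_digit)
    have "x \<in> G n \<longleftrightarrow> h x \<in> B" for x unfolding B_def mem_Collect_eq digit by simp
    then have "G n = h -` B \<inter> space N" using sets.sets_into_space[OF G] by blast
    with \<open>B \<in> sets borel\<close> show ?thesis by blast
  qed
  moreover have "h \<in> borel_measurable N"
    unfolding h_def
    by (intro borel_measurable_suminf borel_measurable_times borel_measurable_indicator
        borel_measurable_const G)
  ultimately show ?thesis by blast
qed

section \<open>Lebesgue spaces\<close>

lemma Lp_norm_powr: "p \<noteq> 0 \<Longrightarrow> Lp_norm M p f powr p = (\<integral>x. \<bar>f x\<bar> powr p \<partial>M)"
  unfolding Lp_norm_def by (simp add: powr_powr integral_nonneg_AE)

lemma Lp_fun_diff:
  assumes p: "1 \<le> p" and f: "f \<in> Lp_fun N p" and g: "g \<in> Lp_fun N p"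
  shows "(\<lambda>x. f x - g x) \<in> Lp_fun N p"
proof -
  have bound: "\<bar>f x - g x\<bar> powr p \<le> 2 powr p * (\<bar>f x\<bar> powr p + \<bar>g x\<bar> powr p)" for x
  proof -
    have "\<bar>f x - g x\<bar> powr p \<le> (2 * max \<bar>f x\<bar> \<bar>g x\<bar>) powr p"
      using p by (intro powr_mono2) auto
    also have "\<dots> = 2 powr p * max \<bar>f x\<bar> \<bar>g x\<bar> powr p" by (simp add: powr_mult)
    also have "\<dots> \<le> 2 powr p * (\<bar>f x\<bar> powr p + \<bar>g x\<bar> powr p)"
      by (intro mult_left_mono) (auto simp: max_def)
    finally show ?thesis .
  qed
  have int: "integrable N (\<lambda>x. 2 powr p * (\<bar>f x\<bar> powr p + \<bar>g x\<bar> powr p))"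
    using f g by (auto simp: Lp_fun_def)
  have "integrable N (\<lambda>x. \<bar>f x - g x\<bar> powr p)"
    by (rule Bochner_Integration.integrable_bound[OF int])
       (use f g bound in \<open>auto simp: Lp_fun_def intro!: AE_I2\<close>)
  then show ?thesis using f g by (auto simp: Lp_fun_def intro: borel_measurable_diff)
qed

lemma Lp_fun_indicator:
  assumes "A \<in> sets N" "emeasure N A < \<infinity>" "0 < p"
  shows "(indicator A :: 'a \<Rightarrow> real) \<in> Lp_fun N p"
proof -
  have "(\<lambda>x. \<bar>indicator A x :: real\<bar> powr p) = indicator A"
    using assms(3) by (auto simp: indicator_def fun_eq_iff)
  then show ?thesis using assms by (auto simp: Lp_fun_def)
qed

lemma Lp_fun_iff_nn_integral:
  "f \<in> Lp_fun M p \<longleftrightarrow> f \<in> borel_measurable M \<and> (\<integral>\<^sup>+x. ennreal (\<bar>f x\<bar> powr p) \<partial>M) < \<infinity>"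
  unfolding Lp_fun_def integrable_iff_bounded by auto

lemma Lp_norm_nn_integral:
  "f \<in> borel_measurable M \<Longrightarrow>
    Lp_norm M p f = enn2real (\<integral>\<^sup>+x. ennreal (\<bar>f x\<bar> powr p) \<partial>M) powr (1 / p)"
  unfolding Lp_norm_def by (subst integral_eq_nn_integral) auto

lemma Lp_fun_restrict_space:
  assumes f: "f \<in> Lp_fun M p" and Y: "Y \<in> sets M"
  shows "f \<in> Lp_fun (restrict_space M Y) p"
proof -
  have "integrable M (\<lambda>x. indicator Y x *\<^sub>R \<bar>f x\<bar> powr p)"
    using f Y by (intro integrable_mult_indicator) (auto simp: Lp_fun_def)
  with f Y show ?thesis
    by (auto simp: Lp_fun_def integrable_restrict_space intro: measurable_restrict_space1)
qed

lemma Lp_norm_cong_AE: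
  assumes "f \<in> borel_measurable M" "g \<in> borel_measurable M" "AE x in M. f x = g x"
  shows "Lp_norm M p f = Lp_norm M p g"
  unfolding Lp_norm_def using assms by (intro arg_cong[where f="\<lambda>r. r powr _"] integral_cong_AE) auto

lemma AE_eq_0_of_Lp_norm_eq_0:
  assumes f: "f \<in> Lp_fun M p" and p: "0 < p" and "Lp_norm M p f = 0"
  shows "AE x in M. f x = 0"
proof -
  have "(\<integral>x. \<bar>f x\<bar> powr p \<partial>M) = 0" using assms Lp_norm_powr[of p M f] by simp
  with f have "AE x in M. \<bar>f x\<bar> powr p = 0"
    by (subst (asm) integral_nonneg_eq_0_iff_AE) (auto simp: Lp_fun_def)
  then show ?thesis by eventually_elim simp
qed

lemma Lp_dense_AE_convergent:
  assumes p: "1 \<le> p" and D: "D \<subseteq> Lp_fun N p"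
    and dense: "\<forall>f\<in>Lp_fun N p. \<forall>e>0. \<exists>d\<in>D. Lp_norm N p (\<lambda>x. f x - d x) < e"
    and f: "f \<in> Lp_fun N p"
  shows "\<exists>d. (\<forall>k. d k \<in> D) \<and> (AE x in N. (\<lambda>k. d k x) \<longlonglongrightarrow> f x)"
proof -
  have "\<exists>d\<in>D. Lp_norm N p (\<lambda>x. f x - d x) < 1 / Suc k" for k
  proof -
    have "(0::real) < 1 / Suc k" by simp
    with dense f show ?thesis by blast
  qed
  then obtain d where d: "\<And>k. d k \<in> D" "\<And>k. Lp_norm N p (\<lambda>x. f x - d k x) < 1 / Suc k"
    by metis
  define u where "u = (\<lambda>k x. \<bar>f x - d k x\<bar> powr p)"
  have u_int: "integrable N (u k)" for k
  proof -
    have "(\<lambda>x. f x - d k x) \<in> Lp_fun N p" using Lp_fun_diff[OF p f] d(1) D by blast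
    then show ?thesis by (simp add: Lp_fun_def u_def)
  qed
  have u_le: "(\<integral>x. norm (u k x) \<partial>N) \<le> 1 / Suc k" for k
  proof -
    have "(\<integral>x. u k x \<partial>N) = Lp_norm N p (\<lambda>x. f x - d k x) powr p"
      using p by (simp add: Lp_norm_powr u_def)
    also have "\<dots> \<le> (1 / Suc k) powr p"
      using d(2)[of k] p by (intro powr_mono2) (auto simp: Lp_norm_def)
    also have "\<dots> \<le> (1 / Suc k) powr 1" using p by (intro powr_mono') auto
    finally show ?thesis by (simp add: u_def)
  qed
  have "(\<lambda>k. \<integral>x. norm (u k x) \<partial>N) \<longlonglongrightarrow> 0"
  proof (rule tendsto_sandwich[of "\<lambda>_. 0" _ _ "\<lambda>k. 1 / Suc k"])
    show "(\<lambda>k. 1 / real (Suc k)) \<longlonglongrightarrow> 0"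
      using LIMSEQ_inverse_real_of_nat by (simp add: inverse_eq_divide)
  qed (use u_le in auto)
  then obtain r where r: "strict_mono r" "AE x in N. (\<lambda>k. u (r k) x) \<longlonglongrightarrow> 0"
    using tendsto_L1_AE_subseq[of N u] u_int by blast
  from r(2) have "AE x in N. (\<lambda>k. d (r k) x) \<longlonglongrightarrow> f x"
  proof eventually_elim
    case (elim x)
    have "(\<lambda>k. u (r k) x powr (1/p)) \<longlonglongrightarrow> 0"
      using p by (intro tendsto_zero_powrI[OF elim]) (auto simp: u_def)
    moreover have "u (r k) x powr (1/p) = \<bar>d (r k) x - f x\<bar>" for k
      using p by (simp add: u_def powr_powr abs_minus_commute)
    ultimately have "(\<lambda>k. \<bar>d (r k) x - f x\<bar>) \<longlonglongrightarrow> 0" by simp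
    then show ?case by (simp only: tendsto_rabs_zero_iff LIM_zero_iff)
  qed
  with d(1) show ?thesis by (intro exI[of _ "\<lambda>k. d (r k)"]) simp
qed

lemma ae_preimages_of_AE_limit:
  fixes d :: "nat \<Rightarrow> 'a \<Rightarrow> real"
  assumes A: "A \<subseteq> space N"
    and d: "\<And>k. d k \<in> borel_measurable (ae_preimage_space N h)"
    and lim: "AE x in N. (\<lambda>k. d k x) \<longlonglongrightarrow> indicator A x"
  shows "A \<in> ae_preimages N h"
proof -
  define A' where "A' = {x\<in>space N. 1/2 < lim (\<lambda>k. d k x)}"
  have "(\<lambda>x. lim (\<lambda>k. d k x)) \<in> borel_measurable (ae_preimage_space N h)"
    using d by (rule borel_measurable_lim_metric)
  then have "A' \<in> ae_preimages N h"
    unfolding A'_def borel_measurable_iff_greater sets_ae_preimage_space space_ae_preimage_space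
    by blast
  moreover from lim AE_space have "AE x in N. (x \<in> A) = (x \<in> A')"
  proof eventually_elim
    case (elim x)
    then have "lim (\<lambda>k. d k x) = indicator A x" by (intro limI)
    with elim show ?case by (auto simp: A'_def indicator_def)
  qed
  ultimately show ?thesis by (rule ae_preimages_cong_AE[OF A])
qed

lemma Lp_separable_generator:
  assumes p: "1 \<le> p" and sf: "sigma_finite_measure N" and sep: "Lp_separable N p"
  shows "\<exists>h :: 'a \<Rightarrow> real. h \<in> borel_measurable N \<and> sets N \<subseteq> ae_preimages N h"
proof -
  obtain D where D: "countable D" "D \<subseteq> Lp_fun N p"
    and dense: "\<forall>f\<in>Lp_fun N p. \<forall>e>0. \<exists>d\<in>D. Lp_norm N p (\<lambda>x. f x - d x) < e"
    using sep by (auto simp: Lp_separable_def)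
  have D_meas: "d \<in> borel_measurable N" if "d \<in> D" for d
    using that D(2) by (auto simp: Lp_fun_def)
  define Gs where "Gs = insert {} ((\<lambda>(d, q). {x\<in>space N. q < d x}) ` (D \<times> \<rat>))"
  define G where "G = from_nat_into Gs"
  have "countable Gs" unfolding Gs_def using D(1) countable_rat by auto
  then have range_G: "range G = Gs" unfolding G_def by (intro range_from_nat_into) (auto simp: Gs_def)
  have "{x\<in>space N. q < d x} \<in> sets N" if "d \<in> D" for d q
    using D_meas[OF that] by measurable
  then have "S \<in> sets N" if "S \<in> Gs" for S using that by (auto simp: Gs_def)
  then have "G n \<in> sets N" for n using range_G by blast
  then obtain h :: "'a \<Rightarrow> real" where h: "h \<in> borel_measurable N"
    and G_preimage: "\<And>n. \<exists>B\<in>sets borel. G n = h -` B \<inter> space N"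
    using exists_function_coding_sets by metis
  have "G n \<in> ae_preimages N h" for n
    using G_preimage[of n] by (auto simp: ae_preimages_def)
  then have Gs_sets: "S \<in> ae_preimages N h" if "S \<in> Gs" for S
    using that range_G by auto
  have D_gen: "d \<in> borel_measurable (ae_preimage_space N h)" if d: "d \<in> D" for d
    unfolding borel_measurable_iff_greater
  proof
    fix a
    have "{x\<in>space N. a < d x} = (\<Union>q\<in>{q\<in>\<rat>. a < q}. {x\<in>space N. q < d x})"
      using Rats_dense_in_real[of a] by (auto intro: less_trans)
    also have "\<dots> \<in> ae_preimages N h"
      using Gs_sets d countable_rat unfolding sets_ae_preimage_space[symmetric]
      by (intro sets.countable_UN') (auto simp: Gs_def intro: countable_subset)
    finally show "{x\<in>space (ae_preimage_space N h). a < d x} \<in> sets (ae_preimage_space N h)"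
      by simp
  qed
  have finite_sets: "A \<in> ae_preimages N h" if A: "A \<in> sets N" "emeasure N A < \<infinity>" for A
  proof -
    obtain d where "\<And>k. d k \<in> D" "AE x in N. (\<lambda>k. d k x) \<longlonglongrightarrow> indicator A x"
      using Lp_dense_AE_convergent[OF p D(2) dense Lp_fun_indicator[OF A]] p by auto
    then show ?thesis
      using sets.sets_into_space[OF A(1)] D_gen by (intro ae_preimages_of_AE_limit) auto
  qed
  obtain C :: "nat \<Rightarrow> 'a set" where C: "range C \<subseteq> sets N" "(\<Union>i. C i) = space N"
    "\<And>i. emeasure N (C i) \<noteq> \<infinity>"
    using sigma_finite_measure.sigma_finite[OF sf] by metis
  have "A \<in> ae_preimages N h" if A: "A \<in> sets N" for A
  proof -
    have "A \<inter> C i \<in> ae_preimages N h" for i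
    proof (rule finite_sets)
      have "emeasure N (A \<inter> C i) \<le> emeasure N (C i)" using C(1) by (intro emeasure_mono) auto
      with C(3)[of i] show "emeasure N (A \<inter> C i) < \<infinity>" by (simp add: le_less_trans less_top)
    qed (use A C(1) in auto)
    then have "(\<Union>i. A \<inter> C i) \<in> sets (ae_preimage_space N h)" by (intro sets.countable_UN) auto
    moreover have "(\<Union>i. A \<inter> C i) = A" using C(2) sets.sets_into_space[OF A] by auto
    ultimately show ?thesis by simp
  qed
  with h show ?thesis by blast
qed

section \<open>Nonatomic separable pieces are copies of the unit interval\<close>

text \<open>A level set of positive measure would be an atom: all its measurable subsets are
  a.e. preimages under the constant map, hence a.e. empty or full.\<close>

lemma purely_nonatomic_level_set_null:
  assumes na: "purely_nonatomic N" and gen: "sets N \<subseteq> ae_preimages N h"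
    and h[measurable]: "h \<in> borel_measurable N"
  shows "emeasure N {x\<in>space N. h x = c} = 0"
proof (rule ccontr)
  define E where "E = {x\<in>space N. h x = c}"
  have E[measurable]: "E \<in> sets N" unfolding E_def by measurable
  assume "emeasure N {x\<in>space N. h x = c} \<noteq> 0"
  moreover have "\<not> is_atom N E" using na by (auto simp: purely_nonatomic_def)
  ultimately obtain B where B: "B \<in> sets N" "B \<subseteq> E" "emeasure N B \<noteq> 0"
    "emeasure N B \<noteq> emeasure N E"
    using E by (auto simp: is_atom_def E_def zero_less_iff_neq_zero)
  then obtain C where C: "AE x in N. (x \<in> B) = (h x \<in> C)"
    using gen by (auto simp: ae_preimages_def)
  show False
  proof (cases "c \<in> C")
    case True
    from C have "AE x in N. (x \<in> B) = (x \<in> E)"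
      by eventually_elim (use B(2) True in \<open>auto simp: E_def\<close>)
    then have "emeasure N B = emeasure N E" using B(1) E by (rule emeasure_eq_AE)
    with B(4) show False by simp
  next
    case False
    from C have "AE x in N. x \<notin> B"
      by eventually_elim (use B(2) False in \<open>auto simp: E_def\<close>)
    then have "B \<in> null_sets N" using B(1) by (simp add: AE_iff_null_sets)
    with B(3) show False by auto
  qed
qed

lemma continuous_mono_sublevel_set:
  fixes F :: "real \<Rightarrow> real"
  assumes cont: "\<And>x. isCont F x" and mono: "mono F" and top: "(F \<longlongrightarrow> 1) at_top"
    and a: "F a \<le> y" and y: "y < 1"
  shows "\<exists>m. (\<forall>x. F x \<le> y \<longleftrightarrow> x \<le> m) \<and> F m = y"
proof -
  define L where "L = {x. F x \<le> y}"
  have cF: "continuous_on UNIV F" using cont by (simp add: continuous_at_imp_continuous_on)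
  obtain b where b: "\<And>x. x \<ge> b \<Longrightarrow> y < F x"
    using order_tendstoD(1)[OF top y] by (auto simp: eventually_at_top_linorder)
  have bdd: "bdd_above L"
  proof (rule bdd_aboveI)
    fix x assume "x \<in> L"
    then show "x \<le> b" using b[of x] by (cases "x \<le> b") (auto simp: L_def)
  qed
  have "closed L" unfolding L_def using cF by (intro closed_Collect_le) (auto intro: continuous_intros)
  then have mL: "Sup L \<in> L" using a bdd by (intro closed_contains_Sup) (auto simp: L_def)
  have iff: "F x \<le> y \<longleftrightarrow> x \<le> Sup L" for x
  proof
    assume "F x \<le> y"
    then show "x \<le> Sup L" using bdd by (intro cSup_upper) (auto simp: L_def)
  next
    assume "x \<le> Sup L"
    then have "F x \<le> F (Sup L)" using mono by (simp add: monoD)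
    then show "F x \<le> y" using mL by (simp add: L_def)
  qed
  have "closure {Sup L<..} \<subseteq> {x. y \<le> F x}"
  proof (rule closure_minimal)
    show "{Sup L<..} \<subseteq> {x. y \<le> F x}"
    proof
      fix x assume "x \<in> {Sup L<..}"
      then show "x \<in> {x. y \<le> F x}" using iff[of x] by auto
    qed
    show "closed {x. y \<le> F x}" using cF by (intro closed_Collect_le) (auto intro: continuous_intros)
  qed
  then have "y \<le> F (Sup L)" by auto
  moreover have "F (Sup L) \<le> y" using mL by (simp add: L_def)
  ultimately show ?thesis by (intro exI[of _ "Sup L"] conjI allI iff antisym)
qed

lemma sigma_finite_probability_density:
  assumes sf: "sigma_finite_measure N" and pos: "emeasure N (space N) > 0"
  shows "\<exists>w\<in>borel_measurable N. (\<forall>x\<in>space N. 0 < w x) \<and> (\<integral>\<^sup>+x. ennreal (w x) \<partial>N) = 1"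
proof -
  obtain w0 where w0: "w0 \<in> borel_measurable N" "integral\<^sup>N N w0 \<noteq> \<infinity>"
    "\<And>x. x \<in> space N \<Longrightarrow> 0 < w0 x \<and> w0 x < \<infinity>"
    using sigma_finite_measure.Ex_finite_integrable_function[OF sf] by blast
  define c where "c = integral\<^sup>N N w0"
  have "c \<noteq> 0"
  proof
    assume "c = 0"
    then have "AE x in N. w0 x = 0" using w0(1) by (simp add: c_def nn_integral_0_iff_AE)
    then have "AE x in N. False" using AE_space by eventually_elim (use w0(3) in force)
    then have "ae_filter N = bot" by (simp add: trivial_limit_def)
    then show False using pos by (simp add: ae_filter_eq_bot_iff)
  qed
  then have c_pos: "0 < enn2real c" and c_real: "c = ennreal (enn2real c)"
    using w0(2) by (simp_all add: c_def enn2real_positive_iff less_top zero_less_iff_neq_zero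
      ennreal_enn2real_if)
  define w where "w x = enn2real (w0 x) / enn2real c" for x
  have "w \<in> borel_measurable N" unfolding w_def using w0(1) by measurable
  moreover have "\<forall>x\<in>space N. 0 < w x"
    unfolding w_def using w0(3) c_pos by (auto simp: enn2real_positive_iff less_top)
  moreover have "(\<integral>\<^sup>+x. ennreal (w x) \<partial>N) = 1"
  proof -
    have "ennreal (w x) = w0 x / c" if "x \<in> space N" for x
      using w0(3)[OF that] c_pos c_real
      by (simp add: w_def divide_ennreal[symmetric] less_top)
    then have "(\<integral>\<^sup>+x. ennreal (w x) \<partial>N) = (\<integral>\<^sup>+x. w0 x / c \<partial>N)" by (intro nn_integral_cong) auto
    also have "\<dots> = c / c" unfolding c_def using w0(1) by (rule nn_integral_divide)
    also have "\<dots> = 1" using \<open>c \<noteq> 0\<close> w0(2) by (intro ennreal_divide_self) (auto simp: c_def less_top)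
    finally show ?thesis .
  qed
  ultimately show ?thesis by blast
qed

context prob_space
begin

lemma cdf_distr_eq:
  "h \<in> borel_measurable M \<Longrightarrow> cdf (distr M borel h) c = prob {x\<in>space M. h x \<le> c}"
  by (simp add: cdf_def measure_distr vimage_def Int_def conj_commute)

lemma isCont_cdf_distr:
  assumes "h \<in> borel_measurable M" and "prob {x\<in>space M. h x = c} = 0"
  shows "isCont (cdf (distr M borel h)) c"
proof -
  interpret \<mu>: real_distribution "distr M borel h" using assms(1) by simp
  show ?thesis using assms by (simp add: \<mu>.isCont_cdf measure_distr vimage_def Int_def conj_commute)
qed

lemma prob_cdf_comp_le:
  assumes h[measurable]: "h \<in> borel_measurable M"
    and atomless: "\<And>c. prob {x\<in>space M. h x = c} = 0" and t: "0 \<le> t" "t \<le> 1"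
  shows "prob {x\<in>space M. cdf (distr M borel h) (h x) \<le> t} = t"
proof -
  define F where "F = cdf (distr M borel h)"
  interpret \<mu>: real_distribution "distr M borel h" by simp
  have cont: "\<And>c. isCont F c" unfolding F_def using h atomless by (rule isCont_cdf_distr)
  have mono: "mono F" unfolding F_def by (auto intro: monoI \<mu>.cdf_nondecreasing)
  have top: "(F \<longlongrightarrow> 1) at_top" unfolding F_def by (rule \<mu>.cdf_lim_at_top_prob)
  consider "t = 1" | "t < 1" "\<exists>a. F a \<le> t" | "\<forall>a. t < F a"
    using t by (cases "t = 1"; cases "\<exists>a. F a \<le> t") (auto simp: not_le)
  then have "prob {x\<in>space M. F (h x) \<le> t} = t"
  proof cases
    case 1
    then have "{x\<in>space M. F (h x) \<le> t} = space M" using \<mu>.cdf_bounded_prob by (auto simp: F_def)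
    with 1 show ?thesis by (simp add: prob_space)
  next
    case 2
    then obtain m where m: "\<And>x. F x \<le> t \<longleftrightarrow> x \<le> m" "F m = t"
      using continuous_mono_sublevel_set[OF cont mono top] by blast
    then have "{x\<in>space M. F (h x) \<le> t} = {x\<in>space M. h x \<le> m}" by auto
    with m(2) show ?thesis using cdf_distr_eq[OF h, of m] by (simp add: F_def)
  next
    case 3
    have "t = 0"
    proof (rule ccontr)
      assume "t \<noteq> 0"
      with t have "eventually (\<lambda>a. F a < t) at_bot"
        unfolding F_def by (intro order_tendstoD(2)[OF \<mu>.cdf_lim_at_bot]) simp
      then obtain a where "F a < t" by (auto simp: eventually_at_bot_linorder)
      with 3 show False by (meson less_asym)
    qed
    moreover have "{x\<in>space M. F (h x) \<le> t} = {}" using 3 by (auto simp: not_le[symmetric])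
    ultimately show ?thesis by (simp only:) simp
  qed
  then show ?thesis by (simp add: F_def)
qed

text \<open>The sets where h is at most c and where its cdf-transform is at most the cdf at c
  differ by an event of probability cdf c - cdf c.\<close>

lemma AE_le_iff_cdf_comp_le:
  assumes h[measurable]: "h \<in> borel_measurable M"
    and atomless: "\<And>c. prob {x\<in>space M. h x = c} = 0"
  shows "AE x in M. h x \<le> c \<longleftrightarrow> cdf (distr M borel h) (h x) \<le> cdf (distr M borel h) c"
proof -
  define F where "F = cdf (distr M borel h)"
  interpret \<mu>: real_distribution "distr M borel h" by simp
  have "mono F" unfolding F_def by (auto intro: monoI \<mu>.cdf_nondecreasing)
  then have [measurable]: "F \<in> borel_measurable borel" by (rule borel_measurable_mono)
  define A where "A = {x\<in>space M. h x \<le> c}"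
  define B where "B = {x\<in>space M. F (h x) \<le> F c}"
  have [measurable]: "A \<in> events" "B \<in> events" unfolding A_def B_def by measurable
  have "A \<subseteq> B" unfolding A_def B_def using \<open>mono F\<close> by (auto simp: monoD)
  moreover have "prob B = F c"
    unfolding B_def F_def using \<mu>.cdf_nonneg \<mu>.cdf_bounded_prob
    by (intro prob_cdf_comp_le[OF h atomless])
  moreover have "prob A = F c" unfolding A_def F_def by (rule cdf_distr_eq[OF h, symmetric])
  ultimately have "prob (B - A) = 0" by (simp add: finite_measure_Diff)
  then have "B - A \<in> null_sets M" by (auto simp: null_sets_def emeasure_eq_measure)
  then have "AE x in M. x \<notin> B - A" by (rule AE_not_in)
  with AE_space have "AE x in M. h x \<le> c \<longleftrightarrow> F (h x) \<le> F c"
    by eventually_elim (use \<open>A \<subseteq> B\<close> in \<open>auto simp: A_def B_def\<close>)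
  then show ?thesis by (simp only: F_def)
qed

end

lemma nn_integral_L01_uniform:
  assumes uniform: "distributed P lborel \<phi> (\<lambda>t. indicator {0..1} t / measure lborel {0..1::real})"
    and g[measurable]: "g \<in> borel_measurable borel"
  shows "(\<integral>\<^sup>+t. g t \<partial>L01) = (\<integral>\<^sup>+x. g (\<phi> x) \<partial>P)"
proof -
  have "\<phi> \<in> measurable P lborel" using uniform by (rule distributed_measurable)
  then have [measurable]: "\<phi> \<in> borel_measurable P" by (simp cong: measurable_cong_sets)
  have "(\<integral>\<^sup>+x. g (\<phi> x) \<partial>P) = (\<integral>\<^sup>+t. g t \<partial>distr P lborel \<phi>)"
    by (subst nn_integral_distr) auto
  also have "distr P lborel \<phi> = density lborel (\<lambda>t. indicator {0..1} t / measure lborel {0..1::real})"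
    using uniform by (simp add: distributed_def)
  also have "(\<integral>\<^sup>+t. g t \<partial>\<dots>) = (\<integral>\<^sup>+t. g t * indicator {0..1} t \<partial>lborel)"
    by (subst nn_integral_density) (auto intro!: nn_integral_cong simp: indicator_def)
  also have "\<dots> = (\<integral>\<^sup>+t. g t * indicator {0..1} t \<partial>lebesgue)"
    by (simp add: nn_integral_completion)
  also have "\<dots> = (\<integral>\<^sup>+t. g t \<partial>L01)"
    by (subst nn_integral_restrict_space) auto
  finally show ?thesis by simp
qed

lemma measurable_L01_of_borel: "g \<in> measurable borel M \<Longrightarrow> g \<in> measurable L01 M"
  by (intro measurable_restrict_space1 measurable_completion) simp

lemma AE_L01_eq_borel:
  fixes G :: "real \<Rightarrow> real"
  assumes "G \<in> borel_measurable L01"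
  shows "\<exists>g\<in>borel_measurable borel. AE t in L01. G t = g t"
proof -
  have "(\<lambda>t. indicator {0..1} t *\<^sub>R G t) \<in> borel_measurable lebesgue"
    using assms by (subst (asm) borel_measurable_restrict_space_iff) auto
  from completion_ex_borel_measurable_real[OF this] obtain g where g: "g \<in> borel_measurable lborel"
    "AE t in lborel. indicator {0..1} t *\<^sub>R G t = g t" by blast
  from AE_completion[OF g(2)] have "AE t in lebesgue. t \<in> {0..1} \<longrightarrow> G t = g t"
    by eventually_elim (auto simp: indicator_def)
  then have "AE t in L01. G t = g t" by (subst AE_restrict_space_iff) auto
  with g(1) show ?thesis by auto
qed

lemma sets_L01_Collect:
  assumes "{t. Q t} \<in> sets borel"
  shows "{t\<in>space L01. Q t} \<in> sets L01"
proof -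
  have "(indicator {t. Q t} :: real \<Rightarrow> real) \<in> borel_measurable L01"
    using assms by (intro measurable_L01_of_borel) simp
  then have "indicator {t. Q t} -` {1::real} \<inter> space L01 \<in> sets L01"
    by (rule measurable_sets) simp
  also have "indicator {t. Q t} -` {1::real} \<inter> space L01 = {t\<in>space L01. Q t}"
    by (auto simp: indicator_def)
  finally show ?thesis .
qed

definition Lp_iso_L01 :: "'a measure \<Rightarrow> real \<Rightarrow> (('a \<Rightarrow> real) \<Rightarrow> real \<Rightarrow> real) \<Rightarrow> bool" where
  "Lp_iso_L01 N p T \<longleftrightarrow>
     (\<forall>f\<in>Lp_fun N p. T f \<in> Lp_fun L01 p) \<and>
     (\<forall>f\<in>Lp_fun N p. \<forall>g\<in>Lp_fun N p. \<forall>a b::real.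
        AE t in L01. T (\<lambda>x. a * f x + b * g x) t = a * T f t + b * T g t) \<and>
     (\<forall>f\<in>Lp_fun N p. Lp_norm L01 p (T f) = Lp_norm N p f) \<and>
     (\<forall>G\<in>Lp_fun L01 p. \<exists>f\<in>Lp_fun N p. AE t in L01. T f t = G t)"

text \<open>The map phi sends the probability measure w dN to Lebesgue measure on [0,1] and
  generates the sigma-algebra of N modulo null sets.\<close>

locale L01_model =
  fixes N :: "'a measure" and \<phi> :: "'a \<Rightarrow> real" and w :: "'a \<Rightarrow> real"
  assumes measurable_\<phi>[measurable]: "\<phi> \<in> borel_measurable N"
    and measurable_w[measurable]: "w \<in> borel_measurable N"
    and w_pos: "\<And>x. x \<in> space N \<Longrightarrow> 0 < w x"
    and ae_generates: "sets N \<subseteq> ae_preimages N \<phi>"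
    and nn_integral_L01: "\<And>g. g \<in> borel_measurable borel \<Longrightarrow>
      (\<integral>\<^sup>+t. g t \<partial>L01) = (\<integral>\<^sup>+x. ennreal (w x) * g (\<phi> x) \<partial>N)"
begin

lemma AE_L01_of_AE_comp:
  assumes Q: "{t. Q t} \<in> sets borel" and AE: "AE x in N. Q (\<phi> x)"
  shows "AE t in L01. Q t"
proof -
  have "- {t. Q t} \<in> sets borel" using Q by (metis sets.compl_sets space_borel Compl_eq_Diff_UNIV)
  then have "(\<integral>\<^sup>+t. indicator (- {t. Q t}) t \<partial>L01)
      = (\<integral>\<^sup>+x. ennreal (w x) * indicator (- {t. Q t}) (\<phi> x) \<partial>N)"
    by (intro nn_integral_L01) simp
  also have "\<dots> = (\<integral>\<^sup>+x. 0 \<partial>N)"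
    using AE by (intro nn_integral_cong_AE) (auto elim!: AE_mp simp: indicator_def)
  finally have "(\<integral>\<^sup>+t. indicator {t. \<not> Q t} t \<partial>L01) = 0" by (simp add: Compl_eq)
  then show ?thesis by (subst AE_iff_nn_integral[OF sets_L01_Collect[OF Q]])
qed

definition pullback :: "real \<Rightarrow> (real \<Rightarrow> real) \<Rightarrow> 'a \<Rightarrow> real" where
  "pullback p g x = g (\<phi> x) * w x powr (1 / p)"

lemma pullback_linear: "pullback p (\<lambda>t. a * g t + b * g' t) x = a * pullback p g x + b * pullback p g' x"
  by (simp add: pullback_def algebra_simps)

lemma measurable_pullback[measurable]:
  assumes [measurable]: "g \<in> borel_measurable borel"
  shows "pullback p g \<in> borel_measurable N"
  unfolding pullback_def[abs_def] by measurable

lemma nn_integral_pullback: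
  assumes p: "0 < p" and g[measurable]: "g \<in> borel_measurable borel"
  shows "(\<integral>\<^sup>+x. ennreal (\<bar>pullback p g x\<bar> powr p) \<partial>N) = (\<integral>\<^sup>+t. ennreal (\<bar>g t\<bar> powr p) \<partial>L01)"
proof -
  have "ennreal (\<bar>pullback p g x\<bar> powr p) = ennreal (w x) * ennreal (\<bar>g (\<phi> x)\<bar> powr p)"
    if "x \<in> space N" for x
    using w_pos[OF that] p
    by (simp add: pullback_def abs_mult powr_mult powr_powr ennreal_mult' mult.commute)
  then have "(\<integral>\<^sup>+x. ennreal (\<bar>pullback p g x\<bar> powr p) \<partial>N)
      = (\<integral>\<^sup>+x. ennreal (w x) * ennreal (\<bar>g (\<phi> x)\<bar> powr p) \<partial>N)"
    by (intro nn_integral_cong) auto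
  also have "\<dots> = (\<integral>\<^sup>+t. ennreal (\<bar>g t\<bar> powr p) \<partial>L01)"
    by (rule nn_integral_L01[symmetric]) measurable
  finally show ?thesis .
qed

lemma AE_eq_pullback:
  assumes f: "f \<in> borel_measurable N"
  shows "\<exists>g\<in>borel_measurable borel. AE x in N. f x = pullback p g x"
proof -
  have "(\<lambda>x. f x / w x powr (1 / p)) \<in> borel_measurable N" using f by measurable
  from AE_eq_comp_of_ae_preimages[OF ae_generates this] obtain g
    where g: "g \<in> borel_measurable borel" "AE x in N. f x / w x powr (1 / p) = g (\<phi> x)" by blast
  from g(2) AE_space have "AE x in N. f x = pullback p g x"
    by eventually_elim (use w_pos in \<open>force simp: pullback_def field_simps\<close>)
  with g(1) show ?thesis by blast
qed

lemma AE_L01_eq_of_pullback: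
  assumes [measurable]: "g \<in> borel_measurable borel" "g' \<in> borel_measurable borel"
    and eq: "AE x in N. pullback p g x = pullback p g' x"
  shows "AE t in L01. g t = g' t"
proof (rule AE_L01_of_AE_comp)
  show "{t. g t = g' t} \<in> sets borel" by measurable
  from eq AE_space show "AE x in N. g (\<phi> x) = g' (\<phi> x)"
    by eventually_elim (use w_pos in \<open>force simp: pullback_def\<close>)
qed

definition pushforward :: "real \<Rightarrow> ('a \<Rightarrow> real) \<Rightarrow> real \<Rightarrow> real" where
  "pushforward p f = (SOME g. g \<in> borel_measurable borel \<and> (AE x in N. f x = pullback p g x))"

lemma pushforward:
  assumes "f \<in> borel_measurable N"
  shows "pushforward p f \<in> borel_measurable borel" "AE x in N. f x = pullback p (pushforward p f) x"
  using someI_ex[OF AE_eq_pullback[OF assms, of p, unfolded Bex_def]]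
  unfolding pushforward_def by blast+

lemma nn_integral_pushforward:
  assumes p: "0 < p" and f: "f \<in> borel_measurable N"
  shows "(\<integral>\<^sup>+t. ennreal (\<bar>pushforward p f t\<bar> powr p) \<partial>L01) = (\<integral>\<^sup>+x. ennreal (\<bar>f x\<bar> powr p) \<partial>N)"
proof -
  have "(\<integral>\<^sup>+t. ennreal (\<bar>pushforward p f t\<bar> powr p) \<partial>L01)
      = (\<integral>\<^sup>+x. ennreal (\<bar>pullback p (pushforward p f) x\<bar> powr p) \<partial>N)"
    using nn_integral_pullback[OF p pushforward(1)[OF f]] by simp
  also have "\<dots> = (\<integral>\<^sup>+x. ennreal (\<bar>f x\<bar> powr p) \<partial>N)"
    using pushforward(2)[OF f, where p=p] by (intro nn_integral_cong_AE) (auto elim!: AE_mp)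
  finally show ?thesis .
qed

lemma Lp_iso_L01_pushforward:
  assumes p: "0 < p"
  shows "Lp_iso_L01 N p (pushforward p)"
  unfolding Lp_iso_L01_def
proof (intro conjI ballI allI)
  fix f assume f: "f \<in> Lp_fun N p"
  then have f_meas[measurable]: "f \<in> borel_measurable N" by (simp add: Lp_fun_def)
  have [measurable]: "pushforward p f \<in> borel_measurable borel" by (rule pushforward(1)[OF f_meas])
  then show "pushforward p f \<in> Lp_fun L01 p"
    using f nn_integral_pushforward[OF p f_meas]
    by (simp add: Lp_fun_iff_nn_integral measurable_L01_of_borel)
  show "Lp_norm L01 p (pushforward p f) = Lp_norm N p f"
    using nn_integral_pushforward[OF p f_meas]
    by (simp add: Lp_norm_nn_integral measurable_L01_of_borel)
  fix g a b assume "g \<in> Lp_fun N p"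
  then have g_meas[measurable]: "g \<in> borel_measurable N" by (simp add: Lp_fun_def)
  define h where "h x = a * f x + b * g x" for x
  have h_meas[measurable]: "h \<in> borel_measurable N" unfolding h_def[abs_def] by measurable
  have [measurable]: "pushforward p g \<in> borel_measurable borel" "pushforward p h \<in> borel_measurable borel"
    by (rule pushforward(1), measurable)+
  have "AE x in N. pullback p (pushforward p h) x
      = pullback p (\<lambda>t. a * pushforward p f t + b * pushforward p g t) x"
    using pushforward(2)[OF h_meas, where p=p] pushforward(2)[OF f_meas, where p=p]
      pushforward(2)[OF g_meas, where p=p]
  proof eventually_elim
    case (elim x)
    then have "pullback p (pushforward p h) x = a * f x + b * g x" by (simp add: h_def)
    with elim show ?case by (simp add: pullback_linear)
  qed
  then have "AE t in L01. pushforward p h t = a * pushforward p f t + b * pushforward p g t"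
    by (intro AE_L01_eq_of_pullback) auto
  then show "AE t in L01. pushforward p (\<lambda>x. a * f x + b * g x) t
      = a * pushforward p f t + b * pushforward p g t"
    by (simp add: h_def[abs_def])
next
  fix G assume "G \<in> Lp_fun L01 p"
  then obtain g where g[measurable]: "g \<in> borel_measurable borel" and Gg: "AE t in L01. G t = g t"
    using AE_L01_eq_borel by (auto simp: Lp_fun_def)
  define f where "f = pullback p g"
  have f_meas[measurable]: "f \<in> borel_measurable N" unfolding f_def by measurable
  have "(\<integral>\<^sup>+x. ennreal (\<bar>f x\<bar> powr p) \<partial>N) = (\<integral>\<^sup>+t. ennreal (\<bar>G t\<bar> powr p) \<partial>L01)"
    unfolding f_def nn_integral_pullback[OF p g] using Gg by (intro nn_integral_cong_AE) auto
  with \<open>G \<in> Lp_fun L01 p\<close> have "f \<in> Lp_fun N p" by (simp add: Lp_fun_iff_nn_integral)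
  have "AE x in N. pullback p (pushforward p f) x = pullback p g x"
    using pushforward(2)[OF f_meas, where p=p] by eventually_elim (simp add: f_def)
  then have "AE t in L01. pushforward p f t = g t"
    using pushforward(1)[OF f_meas, where p=p] by (intro AE_L01_eq_of_pullback[where p=p]) auto
  with Gg have "AE t in L01. pushforward p f t = G t" by eventually_elim simp
  with \<open>f \<in> Lp_fun N p\<close> show "\<exists>f\<in>Lp_fun N p. AE t in L01. pushforward p f t = G t" by blast
qed

end

lemma exists_L01_model:
  assumes sf: "sigma_finite_measure N" and na: "purely_nonatomic N"
    and pos: "emeasure N (space N) > 0"
    and h[measurable]: "h \<in> borel_measurable N" and gen: "sets N \<subseteq> ae_preimages N h"
  shows "\<exists>\<phi> w. L01_model N \<phi> w"
proof -
  obtain w where w[measurable]: "w \<in> borel_measurable N" and w_pos: "\<forall>x\<in>space N. 0 < w x"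
    and w1: "(\<integral>\<^sup>+x. ennreal (w x) \<partial>N) = 1"
    using sigma_finite_probability_density[OF sf pos] by blast
  define P where "P = density N (\<lambda>x. ennreal (w x))"
  have sets_P[simp]: "sets P = sets N" and space_P[simp]: "space P = space N"
    by (simp_all add: P_def)
  have "emeasure P (space P) = (\<integral>\<^sup>+x. ennreal (w x) * indicator (space N) x \<partial>N)"
    by (simp add: P_def emeasure_density)
  also have "\<dots> = 1" unfolding w1[symmetric] by (intro nn_integral_cong) auto
  finally interpret P: prob_space P by (rule prob_spaceI)
  have h_P[measurable]: "h \<in> borel_measurable P" using h by (simp cong: measurable_cong_sets)
  have atomless: "P.prob {x\<in>space P. h x = c} = 0" for c
  proof -
    have "{x\<in>space N. h x = c} \<in> null_sets N"
      using purely_nonatomic_level_set_null[OF na gen h] by (auto simp: null_sets_def)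
    then have "{x\<in>space N. h x = c} \<in> null_sets P"
      using AE_not_in by (force simp: P_def null_sets_density_iff elim: AE_mp)
    then show ?thesis by (simp add: measure_def null_setsD1)
  qed
  define F where "F = cdf (distr P borel h)"
  define \<phi> where "\<phi> x = F (h x)" for x
  interpret \<mu>: real_distribution "distr P borel h" by simp
  have "mono F" unfolding F_def by (auto intro: monoI \<mu>.cdf_nondecreasing)
  then have [measurable]: "F \<in> borel_measurable borel" by (rule borel_measurable_mono)
  have \<phi>_N[measurable]: "\<phi> \<in> borel_measurable N" unfolding \<phi>_def[abs_def] by measurable
  then have [measurable]: "\<phi> \<in> borel_measurable P" by (simp cong: measurable_cong_sets)
  have uniform: "distributed P lborel \<phi> (\<lambda>t. indicator {0..1} t / measure lborel {0..1::real})"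
    by (rule P.uniform_distrI_borel_atLeastAtMost)
       (use P.prob_cdf_comp_le[OF h_P atomless] in \<open>auto simp: \<phi>_def F_def\<close>)
  have "h \<in> borel_measurable (ae_preimage_space P \<phi>)"
    unfolding borel_measurable_iff_le
  proof
    fix c
    have "AE x in P. (x \<in> {x\<in>space P. h x \<le> c}) = (\<phi> x \<in> {..F c})"
      using P.AE_le_iff_cdf_comp_le[OF h_P atomless, of c] AE_space
      by eventually_elim (auto simp: \<phi>_def F_def)
    then show "{x\<in>space (ae_preimage_space P \<phi>). h x \<le> c} \<in> sets (ae_preimage_space P \<phi>)"
      unfolding sets_ae_preimage_space space_ae_preimage_space ae_preimages_def
      by (intro CollectI conjI bexI[of _ "{..F c}"]) auto
  qed
  then have "ae_preimages P h \<subseteq> ae_preimages P \<phi>" by (rule ae_preimages_trans)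
  then have "sets N \<subseteq> ae_preimages N \<phi>"
    using gen w_pos unfolding P_def by (subst (asm) (1 2) ae_preimages_density) auto
  moreover have "(\<integral>\<^sup>+t. g t \<partial>L01) = (\<integral>\<^sup>+x. ennreal (w x) * g (\<phi> x) \<partial>N)"
    if [measurable]: "g \<in> borel_measurable borel" for g
    using nn_integral_L01_uniform[OF uniform that] by (simp add: P_def nn_integral_density)
  ultimately have "L01_model N \<phi> w" using w_pos by unfold_locales auto
  then show ?thesis by blast
qed

lemma Lp_iso_L01_exists:
  assumes p: "1 \<le> p" and sf: "sigma_finite_measure N" and na: "purely_nonatomic N"
    and sep: "Lp_separable N p" and pos: "emeasure N (space N) > 0"
  shows "\<exists>T. Lp_iso_L01 N p T"
proof -
  obtain h :: "'a \<Rightarrow> real" where "h \<in> borel_measurable N" "sets N \<subseteq> ae_preimages N h"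
    using Lp_separable_generator[OF p sf sep] by blast
  then obtain \<phi> w where "L01_model N \<phi> w" using exists_L01_model[OF sf na pos] by blast
  then have "Lp_iso_L01 N p (L01_model.pushforward N \<phi> w p)"
    using p by (intro L01_model.Lp_iso_L01_pushforward) auto
  then show ?thesis by blast
qed

section \<open>Gluing along a partition\<close>

definition ae_partition :: "'a measure \<Rightarrow> 'i set \<Rightarrow> ('i \<Rightarrow> 'a set) \<Rightarrow> bool" where
  "ae_partition M J Xs \<longleftrightarrow>
     (\<forall>i\<in>J. Xs i \<in> sets M) \<and>
     (\<forall>i\<in>J. \<forall>j\<in>J. i \<noteq> j \<longrightarrow> emeasure M (Xs i \<inter> Xs j) = 0) \<and>
     (\<forall>E\<in>sets M. emeasure M E < \<infinity> \<longrightarrow> emeasure M E = (\<Sum>\<^sub>\<infinity>i\<in>J. emeasure M (E \<inter> Xs i)))"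

lemma ae_partition_if_separable_partition:
  "separable_partition M J Xs \<Longrightarrow> ae_partition M J Xs"
  by (simp add: separable_partition_def ae_partition_def)

lemma infsum_ennreal_eq_SUP:
  "infsum (f :: 'b \<Rightarrow> ennreal) A = (SUP F\<in>{F. finite F \<and> F \<subseteq> A}. sum f F)"
  by (rule nonneg_infsum_complete) simp

lemma infsum_cmult_ennreal: "infsum (\<lambda>x. c * (f x :: ennreal)) A = c * infsum f A"
  unfolding infsum_ennreal_eq_SUP by (simp add: SUP_mult_left_ennreal sum_distrib_left)

lemma infsum_SUP_ennreal:
  fixes g :: "nat \<Rightarrow> 'b \<Rightarrow> ennreal"
  assumes "\<And>j. incseq (\<lambda>i. g i j)"
  shows "infsum (\<lambda>j. SUP i. g i j) A = (SUP i. infsum (g i) A)"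
proof -
  have "infsum (\<lambda>j. SUP i. g i j) A = (SUP F\<in>{F. finite F \<and> F \<subseteq> A}. SUP i. sum (g i) F)"
    unfolding infsum_ennreal_eq_SUP using assms by (intro SUP_cong refl ennreal_SUP_sum[symmetric]) auto
  also have "\<dots> = (SUP i. infsum (g i) A)"
    unfolding infsum_ennreal_eq_SUP by (rule SUP_commute)
  finally show ?thesis .
qed

lemma nn_integral_ae_partition:
  fixes v :: "'a \<Rightarrow> ennreal"
  assumes part: "ae_partition M J Xs"
    and v: "v \<in> borel_measurable M" and fin: "(\<integral>\<^sup>+x. v x \<partial>M) < \<infinity>"
  shows "(\<integral>\<^sup>+x. v x \<partial>M) = (\<Sum>\<^sub>\<infinity>i\<in>J. \<integral>\<^sup>+x. v x * indicator (Xs i) x \<partial>M)"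
  using v fin
proof (induction rule: borel_measurable_induct)
  case (cong f g)
  have "(\<integral>\<^sup>+x. f x * indicator (Xs i) x \<partial>M) = (\<integral>\<^sup>+x. g x * indicator (Xs i) x \<partial>M)" for i
    using cong(3) by (intro nn_integral_cong) auto
  moreover have "(\<integral>\<^sup>+x. f x \<partial>M) = (\<integral>\<^sup>+x. g x \<partial>M)" using cong(3) by (intro nn_integral_cong) auto
  ultimately show ?case using cong(4,5) by simp
next
  case (set A)
  have "(\<integral>\<^sup>+x. indicator A x * indicator (Xs i) x \<partial>M) = emeasure M (A \<inter> Xs i)" if "i \<in> J" for i
  proof -
    have "A \<inter> Xs i \<in> sets M" using set(1) part that by (auto simp: ae_partition_def)
    then show ?thesis by (simp add: indicator_inter_arith[symmetric])
  qed
  then show ?case using part set by (simp add: ae_partition_def cong: infsum_cong)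
next
  case (mult u c)
  show ?case
  proof (cases "c = 0")
    case False
    have "(\<integral>\<^sup>+x. c * u x \<partial>M) = c * (\<integral>\<^sup>+x. u x \<partial>M)" using mult(2) by (rule nn_integral_cmult)
    with mult(5) False have "(\<integral>\<^sup>+x. u x \<partial>M) < \<infinity>" by (auto simp: ennreal_mult_less_top)
    with mult.IH have IH: "(\<integral>\<^sup>+x. u x \<partial>M) = (\<Sum>\<^sub>\<infinity>i\<in>J. \<integral>\<^sup>+x. u x * indicator (Xs i) x \<partial>M)" .
    have "(\<integral>\<^sup>+x. c * u x * indicator (Xs i) x \<partial>M) = c * (\<integral>\<^sup>+x. u x * indicator (Xs i) x \<partial>M)"
      if "i \<in> J" for i
    proof -
      have [measurable]: "Xs i \<in> sets M" using part that by (simp add: ae_partition_def)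
      show ?thesis
        unfolding mult.assoc by (intro nn_integral_cmult) (use mult(2) in measurable)
    qed
    then show ?thesis
      using IH \<open>(\<integral>\<^sup>+x. c * u x \<partial>M) = _\<close> by (simp add: infsum_cmult_ennreal cong: infsum_cong)
  qed simp
next
  case (add u v)
  have split: "(\<integral>\<^sup>+x. v x + u x \<partial>M) = (\<integral>\<^sup>+x. v x \<partial>M) + (\<integral>\<^sup>+x. u x \<partial>M)"
    using add by (simp add: nn_integral_add)
  have "(\<integral>\<^sup>+x. (v x + u x) * indicator (Xs i) x \<partial>M)
      = (\<integral>\<^sup>+x. v x * indicator (Xs i) x \<partial>M) + (\<integral>\<^sup>+x. u x * indicator (Xs i) x \<partial>M)"
    if "i \<in> J" for i
  proof -
    have [measurable]: "Xs i \<in> sets M" using part that by (simp add: ae_partition_def)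
    show ?thesis unfolding distrib_right by (intro nn_integral_add) (use add(1,3) in measurable)
  qed
  then have "(\<Sum>\<^sub>\<infinity>i\<in>J. \<integral>\<^sup>+x. (v x + u x) * indicator (Xs i) x \<partial>M)
      = (\<Sum>\<^sub>\<infinity>i\<in>J. (\<integral>\<^sup>+x. v x * indicator (Xs i) x \<partial>M)
        + (\<integral>\<^sup>+x. u x * indicator (Xs i) x \<partial>M))"
    by (rule infsum_cong)
  also have "\<dots> = (\<Sum>\<^sub>\<infinity>i\<in>J. \<integral>\<^sup>+x. v x * indicator (Xs i) x \<partial>M)
        + (\<Sum>\<^sub>\<infinity>i\<in>J. \<integral>\<^sup>+x. u x * indicator (Xs i) x \<partial>M)"
    by (rule infsum_add; rule nonneg_summable_on_complete; simp)+
  finally have sum_split: "(\<Sum>\<^sub>\<infinity>i\<in>J. \<integral>\<^sup>+x. (v x + u x) * indicator (Xs i) x \<partial>M)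
      = (\<Sum>\<^sub>\<infinity>i\<in>J. \<integral>\<^sup>+x. v x * indicator (Xs i) x \<partial>M)
        + (\<Sum>\<^sub>\<infinity>i\<in>J. \<integral>\<^sup>+x. u x * indicator (Xs i) x \<partial>M)" .
  have "(\<integral>\<^sup>+x. u x \<partial>M) < \<infinity>" "(\<integral>\<^sup>+x. v x \<partial>M) < \<infinity>" using add(8) split by auto
  with add.IH split sum_split show ?case by simp
next
  case (seq U)
  have "(\<integral>\<^sup>+x. U i x \<partial>M) \<le> (\<integral>\<^sup>+x. (SUP i. U i) x \<partial>M)" for i
    by (intro nn_integral_mono) (auto intro: SUP_upper)
  with seq.prems have IH: "(\<integral>\<^sup>+x. U i x \<partial>M) = (\<Sum>\<^sub>\<infinity>j\<in>J. \<integral>\<^sup>+x. U i x * indicator (Xs j) x \<partial>M)"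
    for i using seq.IH by (meson le_less_trans)
  have mono_U: "incseq (\<lambda>i. U i x)" for x using seq.hyps by (auto simp: incseq_def le_fun_def)
  have "(\<integral>\<^sup>+x. (SUP i. U i) x * indicator (Xs j) x \<partial>M) = (SUP i. \<integral>\<^sup>+x. U i x * indicator (Xs j) x \<partial>M)"
    if "j \<in> J" for j
  proof -
    have [measurable]: "Xs j \<in> sets M" using part that by (simp add: ae_partition_def)
    have "(SUP i. U i x * indicator (Xs j) x) = (SUP i. U i) x * indicator (Xs j) x" for x
      by (simp add: image_comp SUP_mult_right_ennreal)
    moreover have "(\<integral>\<^sup>+x. (SUP i. U i x * indicator (Xs j) x) \<partial>M)
        = (SUP i. \<integral>\<^sup>+x. U i x * indicator (Xs j) x \<partial>M)"
      using seq(1) mono_U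
      by (intro nn_integral_monotone_convergence_SUP) (auto simp: incseq_def le_fun_def intro!: mult_right_mono)
    ultimately show ?thesis by simp
  qed
  moreover have "(\<integral>\<^sup>+x. (SUP i. U i) x \<partial>M) = (SUP i. \<integral>\<^sup>+x. U i x \<partial>M)"
    unfolding SUP_apply using seq(1) mono_U
    by (intro nn_integral_monotone_convergence_SUP) (auto simp: incseq_def le_fun_def)
  moreover have "incseq (\<lambda>i. \<integral>\<^sup>+x. U i x * indicator (Xs j) x \<partial>M)" for j
    using mono_U by (auto simp: incseq_def intro!: nn_integral_mono mult_right_mono)
  ultimately show ?case
    by (simp add: IH infsum_SUP_ennreal cong: infsum_cong)
qed

lemma has_sum_integral_ae_partition:
  fixes u :: "'a \<Rightarrow> real"
  assumes part: "ae_partition M J Xs"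
    and u[measurable]: "u \<in> borel_measurable M" and u_nn: "\<And>x. 0 \<le> u x" and u_int: "integrable M u"
  shows "((\<lambda>i. \<integral>x. u x \<partial>restrict_space M (Xs i)) has_sum (\<integral>x. u x \<partial>M)) J"
proof -
  define a where "a i = (\<integral>x. u x \<partial>restrict_space M (Xs i))" for i
  define b where "b i = (\<integral>\<^sup>+x. ennreal (u x) * indicator (Xs i) x \<partial>M)" for i
  define S where "S = (\<integral>\<^sup>+x. ennreal (u x) \<partial>M)"
  have S_fin: "S < \<infinity>" using u_int u_nn unfolding S_def integrable_iff_bounded by simp
  have S_eq: "S = (\<Sum>\<^sub>\<infinity>i\<in>J. b i)"
    unfolding S_def b_def using S_fin by (intro nn_integral_ae_partition[OF part]) (auto simp: S_def)
  have a_nn: "0 \<le> a i" for i unfolding a_def by (simp add: u_nn)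
  have ab: "ennreal (a i) = b i" if "i \<in> J" for i
  proof -
    have "Xs i \<inter> space M \<in> sets M" using part that by (auto simp: ae_partition_def)
    then have "(\<integral>\<^sup>+x. ennreal (u x) \<partial>restrict_space M (Xs i)) = b i"
      unfolding b_def by (rule nn_integral_restrict_space)
    moreover have "b i \<le> S" unfolding b_def S_def by (intro nn_integral_mono) (auto simp: indicator_def)
    ultimately show ?thesis
      using S_fin unfolding a_def
      by (subst integral_eq_nn_integral) (auto intro: measurable_restrict_space1 simp: u_nn less_top
        ennreal_enn2real_if)
  qed
  have sum_ab: "ennreal (sum a F) = sum b F" if "F \<subseteq> J" for F
  proof -
    have "ennreal (sum a F) = (\<Sum>i\<in>F. ennreal (a i))" using a_nn by (simp add: sum_ennreal)
    also have "\<dots> = sum b F" using that ab by (intro sum.cong) auto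
    finally show ?thesis .
  qed
  have summable: "a summable_on J"
  proof (rule nonneg_bdd_above_summable_on[OF a_nn bdd_aboveI])
    fix r assume "r \<in> sum a ` {F. F \<subseteq> J \<and> finite F}"
    then obtain F where F: "F \<subseteq> J" "finite F" "r = sum a F" by auto
    have "ennreal r \<le> S" unfolding S_eq infsum_ennreal_eq_SUP using F sum_ab by (auto intro: SUP_upper)
    moreover have "0 \<le> r" using F(3) a_nn by (simp add: sum_nonneg)
    ultimately show "r \<le> enn2real S" using enn2real_mono S_fin by fastforce
  qed
  have "ennreal (infsum a J) = (SUP F\<in>{F. finite F \<and> F \<subseteq> J}. ennreal (sum a F))"
    using summable a_nn by (rule infsum_nonneg_is_SUPREMUM_ennreal)
  also have "\<dots> = S" unfolding S_eq infsum_ennreal_eq_SUP by (intro SUP_cong refl sum_ab) auto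
  also have "\<dots> = ennreal (\<integral>x. u x \<partial>M)"
    unfolding S_def using u_int u_nn by (intro nn_integral_eq_integral) auto
  finally have "infsum a J = (\<integral>x. u x \<partial>M)"
    using a_nn u_nn by (simp add: infsum_nonneg integral_nonneg_AE)
  with summable show ?thesis unfolding a_def by (metis has_sum_infsum)
qed

lemma sigma_finite_measure_restrict_space:
  assumes "sigma_finite_set M Y"
  shows "sigma_finite_measure (restrict_space M Y)"
proof
  obtain A :: "nat \<Rightarrow> 'a set" where Y: "Y \<in> sets M" and A: "range A \<subseteq> sets M" "\<Union>(range A) = Y"
    "\<And>n. emeasure M (A n) < \<infinity>"
    using assms unfolding sigma_finite_set_def by blast
  have A_Y: "A n \<subseteq> Y" for n using A(2) by blast
  have "emeasure (restrict_space M Y) (A n) = emeasure M (A n)" for n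
    using A(1) A_Y Y by (subst emeasure_restrict_space) auto
  then have "emeasure (restrict_space M Y) (A n) \<noteq> \<infinity>" for n using A(3)[of n] by simp
  moreover have "range A \<subseteq> sets (restrict_space M Y)"
    using A(1) A_Y Y by (auto simp: sets_restrict_space_iff)
  moreover have "space (restrict_space M Y) = Y"
    using sets.sets_into_space[OF Y] by (simp add: space_restrict_space Int_absorb2)
  ultimately show "\<exists>B. countable B \<and> B \<subseteq> sets (restrict_space M Y) \<and> \<Union>B = space (restrict_space M Y) \<and>
      (\<forall>a\<in>B. emeasure (restrict_space M Y) a \<noteq> \<infinity>)"
    using A(2) by (intro exI[of _ "range A"]) auto
qed

lemma AE_not_in_other_pieces:
  assumes part: "ae_partition M J Xs" and j: "j \<in> J" and K: "K \<subseteq> J" "countable K"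
  shows "AE x in M. x \<in> Xs j \<longrightarrow> (\<forall>k\<in>K - {j}. x \<notin> Xs k)"
proof -
  have null: "Xs j \<inter> Xs k \<in> null_sets M" if "k \<in> K - {j}" for k
    using part j K(1) that by (intro null_setsI) (auto simp: ae_partition_def)
  have "AE x in M. \<forall>k\<in>K - {j}. x \<notin> Xs j \<inter> Xs k"
  proof (subst AE_ball_countable)
    show "countable (K - {j})" using K(2) by auto
    show "\<forall>k\<in>K - {j}. AE x in M. x \<notin> Xs j \<inter> Xs k" using null by (blast intro: AE_not_in)
  qed
  then show ?thesis by eventually_elim auto
qed

lemma suminf_to_nat_on_le_infsum:
  fixes a :: "'i \<Rightarrow> real"
  assumes K: "countable K" and a: "a summable_on K" "\<And>j. j \<in> K \<Longrightarrow> 0 \<le> a j"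
  shows "(\<Sum>n. if n \<in> to_nat_on K ` K then ennreal (a (from_nat_into K n)) else 0)
    \<le> ennreal (infsum a K)"
proof (rule suminf_le_const)
  fix N
  define enc where "enc = to_nat_on K"
  define F where "F = {j\<in>K. enc j < N}"
  have enc_inj: "inj_on enc K" unfolding enc_def using K by (rule inj_on_to_nat_on)
  have "F \<subseteq> from_nat_into K ` {..<N}"
  proof
    fix j assume "j \<in> F"
    then show "j \<in> from_nat_into K ` {..<N}"
      using K by (metis (mono_tags) F_def enc_def from_nat_into_to_nat_on image_eqI lessThan_iff
        mem_Collect_eq)
  qed
  then have "finite F" by (rule finite_subset) simp
  have "(\<Sum>n<N. if n \<in> enc ` K then ennreal (a (from_nat_into K n)) else 0)
      = (\<Sum>n\<in>{..<N} \<inter> enc ` K. ennreal (a (from_nat_into K n)))"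
    by (simp add: sum.If_cases Int_commute)
  also have "{..<N} \<inter> enc ` K = enc ` F" by (auto simp: F_def)
  also have "(\<Sum>n\<in>enc ` F. ennreal (a (from_nat_into K n))) = (\<Sum>j\<in>F. ennreal (a j))"
    using K by (subst sum.reindex) (auto simp: F_def enc_def intro: inj_on_subset[OF enc_inj[unfolded enc_def]])
  also have "\<dots> = ennreal (sum a F)" using a(2) by (intro sum_ennreal) (auto simp: F_def)
  also have "sum a F \<le> infsum a K"
  proof -
    have "infsum a F \<le> infsum a K"
      using a \<open>finite F\<close> by (intro infsum_mono_neutral) (auto simp: F_def)
    then show ?thesis using \<open>finite F\<close> by simp
  qed
  finally show "(\<Sum>n<N. if n \<in> to_nat_on K ` K then ennreal (a (from_nat_into K n)) else 0)
      \<le> ennreal (infsum a K)" by (simp add: enc_def ennreal_leI)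
qed simp

text \<open>Countably many pieces are glued after disjointifying the sets Xs j along an
  enumeration of the index set; a.e.-disjointness makes the choice of enumeration irrelevant.\<close>

lemma Lp_fun_glue:
  assumes part: "ae_partition M J Xs" and K: "K \<subseteq> J" "countable K"
    and ff: "\<And>j. j \<in> K \<Longrightarrow> ff j \<in> Lp_fun (restrict_space M (Xs j)) p"
    and summable: "(\<lambda>j. \<integral>x. \<bar>ff j x\<bar> powr p \<partial>restrict_space M (Xs j)) summable_on K"
  shows "\<exists>f\<in>Lp_fun M p. (\<forall>j\<in>K. AE x in restrict_space M (Xs j). f x = ff j x) \<and>
    (\<forall>j\<in>J - K. AE x in restrict_space M (Xs j). f x = 0)"
proof -
  have Xs[measurable]: "Xs j \<in> sets M" if "j \<in> J" for j using part that by (simp add: ae_partition_def)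
  define enc where "enc = to_nat_on K"
  define dec where "dec = from_nat_into K"
  have dec_enc[simp]: "dec (enc j) = j" if "j \<in> K" for j
    unfolding dec_def enc_def using K(2) that by simp
  have enc_inj: "enc j = enc k \<longleftrightarrow> j = k" if "j \<in> K" "k \<in> K" for j k
    using that dec_enc by metis
  define Y where "Y j = Xs j - (\<Union>k\<in>{k\<in>K. enc k < enc j}. Xs k)" for j
  have Y_sets[measurable]: "Y j \<in> sets M" if "j \<in> K" for j
    unfolding Y_def using that K
    by (intro sets.Diff sets.countable_UN') (auto intro: countable_subset[OF _ K(2)])
  have Y_disj: "j = k" if "j \<in> K" "k \<in> K" "x \<in> Y j" "x \<in> Y k" for j k x
  proof (rule ccontr)
    assume "j \<noteq> k"
    then have "enc j < enc k \<or> enc k < enc j" using enc_inj[OF that(1,2)] by arith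
    then show False using that by (auto simp: Y_def)
  qed
  define g where "g j x = indicator (Xs j) x * ff j x" for j x
  have g_meas[measurable]: "g j \<in> borel_measurable M" if "j \<in> K" for j
  proof -
    have "ff j \<in> borel_measurable (restrict_space M (Xs j))" using ff[OF that] by (simp add: Lp_fun_def)
    then show ?thesis unfolding g_def[abs_def] using Xs[of j] that K(1)
      by (subst (asm) borel_measurable_restrict_space_iff) auto
  qed
  define P where "P n x = (if n \<in> enc ` K then indicator (Y (dec n)) x * g (dec n) x else 0)" for n x
  have P_meas[measurable]: "P n \<in> borel_measurable M" for n
    unfolding P_def by (cases "n \<in> enc ` K") auto
  have P_in: "P n x = (if n = enc j then ff j x else 0)" if j: "j \<in> K" "x \<in> Y j" for j n x
  proof (cases "n \<in> enc ` K")
    case True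
    then obtain k where k: "k \<in> K" "n = enc k" by auto
    show ?thesis
    proof (cases "k = j")
      case True
      then show ?thesis using j k by (auto simp: P_def g_def Y_def)
    next
      case False
      then have "x \<notin> Y k" using Y_disj[OF k(1) j(1) _ j(2)] by auto
      then show ?thesis using j k False enc_inj by (auto simp: P_def)
    qed
  qed (use j in \<open>auto simp: P_def\<close>)
  have P_out: "P n x = 0" if "\<forall>j\<in>K. x \<notin> Y j" for n x
    using that by (auto simp: P_def)
  define f where "f x = (\<Sum>n. P n x)" for x
  have f_in: "f x = ff j x" if "j \<in> K" "x \<in> Y j" for j x
    unfolding f_def P_in[OF that] using sums_single[of "enc j" "\<lambda>_. ff j x"] by (simp add: sums_iff)
  have f_out: "f x = 0" if "\<forall>j\<in>K. x \<notin> Y j" for x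
    unfolding f_def P_out[OF that] by simp
  have "ennreal (\<bar>f x\<bar> powr p) = (\<Sum>n. ennreal (\<bar>P n x\<bar> powr p))" for x
  proof (cases "\<exists>j\<in>K. x \<in> Y j")
    case True
    then obtain j where j: "j \<in> K" "x \<in> Y j" by blast
    show ?thesis unfolding f_in[OF j] P_in[OF j]
      using sums_single[of "enc j" "\<lambda>_. ennreal (\<bar>ff j x\<bar> powr p)"]
      by (simp add: sums_iff if_distrib[of "\<lambda>r. ennreal (\<bar>r\<bar> powr p)"] cong: if_cong)
  qed (use f_out P_out in simp)
  moreover have "(\<integral>\<^sup>+x. ennreal (\<bar>P n x\<bar> powr p) \<partial>M)
      \<le> (if n \<in> enc ` K then ennreal (\<integral>x. \<bar>ff (dec n) x\<bar> powr p \<partial>restrict_space M (Xs (dec n))) else 0)"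
    for n
  proof (cases "n \<in> enc ` K")
    case True
    then have j: "dec n \<in> K" using dec_enc by auto
    with K(1) have [measurable]: "Xs (dec n) \<in> sets M" by auto
    have "(\<integral>\<^sup>+x. ennreal (\<bar>P n x\<bar> powr p) \<partial>M)
        \<le> (\<integral>\<^sup>+x. ennreal (\<bar>ff (dec n) x\<bar> powr p) * indicator (Xs (dec n)) x \<partial>M)"
      using True by (intro nn_integral_mono) (auto simp: P_def g_def Y_def indicator_def)
    also have "\<dots> = ennreal (\<integral>x. \<bar>ff (dec n) x\<bar> powr p \<partial>restrict_space M (Xs (dec n)))"
      using ff[OF j]
      by (subst nn_integral_restrict_space[symmetric]) (auto intro!: nn_integral_eq_integral simp: Lp_fun_def)
    finally show ?thesis using True by simp
  qed (simp add: P_def)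
  ultimately have "(\<integral>\<^sup>+x. ennreal (\<bar>f x\<bar> powr p) \<partial>M)
      \<le> (\<Sum>n. if n \<in> enc ` K
              then ennreal (\<integral>x. \<bar>ff (dec n) x\<bar> powr p \<partial>restrict_space M (Xs (dec n))) else 0)"
    by (simp add: nn_integral_suminf suminf_le)
  also have "\<dots> \<le> ennreal (\<Sum>\<^sub>\<infinity>j\<in>K. \<integral>x. \<bar>ff j x\<bar> powr p \<partial>restrict_space M (Xs j))"
    unfolding enc_def dec_def
    by (rule suminf_to_nat_on_le_infsum[OF K(2) summable]) (simp add: integral_nonneg_AE)
  finally have "(\<integral>\<^sup>+x. ennreal (\<bar>f x\<bar> powr p) \<partial>M) < \<infinity>" by (simp add: le_less_trans)
  then have f_Lp: "f \<in> Lp_fun M p" unfolding Lp_fun_iff_nn_integral f_def[abs_def] by simp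
  have "AE x in restrict_space M (Xs j). f x = ff j x" if j: "j \<in> K" for j
  proof -
    from j K(1) have jJ: "j \<in> J" by auto
    from AE_not_in_other_pieces[OF part jJ K]
    have "AE x in M. x \<in> Xs j \<longrightarrow> f x = ff j x"
      by eventually_elim (use j in \<open>auto intro!: f_in simp: Y_def\<close>)
    then show ?thesis using jJ by (subst AE_restrict_space_iff) auto
  qed
  moreover have "AE x in restrict_space M (Xs j). f x = 0" if j: "j \<in> J - K" for j
  proof -
    from j have jJ: "j \<in> J" by auto
    from AE_not_in_other_pieces[OF part jJ K]
    have "AE x in M. x \<in> Xs j \<longrightarrow> f x = 0"
      by eventually_elim (use j in \<open>auto intro!: f_out simp: Y_def\<close>)
    then show ?thesis using j by (subst AE_restrict_space_iff) auto
  qed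
  ultimately show ?thesis using f_Lp by blast
qed

lemma Lp_iso_L01_cong_AE:
  assumes T: "Lp_iso_L01 N p T" and p: "1 \<le> p"
    and f: "f \<in> Lp_fun N p" and g: "g \<in> Lp_fun N p" and fg: "AE x in N. f x = g x"
  shows "AE t in L01. T f t = T g t"
proof -
  have fg_Lp: "(\<lambda>x. f x - g x) \<in> Lp_fun N p" by (rule Lp_fun_diff[OF p f g])
  have "Lp_norm N p (\<lambda>x. f x - g x) = Lp_norm N p (\<lambda>x. 0)"
    using f g fg by (intro Lp_norm_cong_AE) (auto simp: Lp_fun_def elim: AE_mp)
  then have "Lp_norm L01 p (T (\<lambda>x. f x - g x)) = 0"
    using T fg_Lp p by (simp add: Lp_iso_L01_def Lp_norm_def)
  then have "AE t in L01. T (\<lambda>x. f x - g x) t = 0"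
    using T fg_Lp p by (intro AE_eq_0_of_Lp_norm_eq_0) (auto simp: Lp_iso_L01_def)
  moreover have "AE t in L01. T (\<lambda>x. 1 * f x + (-1) * g x) t = 1 * T f t + (-1) * T g t"
    using T f g unfolding Lp_iso_L01_def by blast
  ultimately show ?thesis by eventually_elim simp
qed

lemma Lp_iso_L01_zero:
  assumes T: "Lp_iso_L01 N p T"
  shows "AE t in L01. T (\<lambda>x. 0) t = 0"
proof -
  have zero: "(\<lambda>x. 0::real) \<in> Lp_fun N p" by (simp add: Lp_fun_def)
  from T have "\<And>a b. AE t in L01. T (\<lambda>x. a * 0 + b * 0) t = a * T (\<lambda>x. 0) t + b * T (\<lambda>x. 0) t"
    using zero unfolding Lp_iso_L01_def by fast
  from this[of 0 0] show ?thesis by simp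
qed

lemma has_sum_Lp_norm_pieces:
  assumes p: "1 \<le> p" and part: "ae_partition M J Xs"
    and T: "\<And>i. i \<in> J \<Longrightarrow> Lp_iso_L01 (restrict_space M (Xs i)) p (T i)"
    and f: "f \<in> Lp_fun M p"
  shows "((\<lambda>i. Lp_norm L01 p (T i f) powr p) has_sum (\<integral>x. \<bar>f x\<bar> powr p \<partial>M)) J"
proof -
  have "((\<lambda>i. \<integral>x. \<bar>f x\<bar> powr p \<partial>restrict_space M (Xs i)) has_sum (\<integral>x. \<bar>f x\<bar> powr p \<partial>M)) J"
    using f by (intro has_sum_integral_ae_partition[OF part]) (auto simp: Lp_fun_def)
  moreover have "Lp_norm L01 p (T i f) powr p = (\<integral>x. \<bar>f x\<bar> powr p \<partial>restrict_space M (Xs i))"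
    if "i \<in> J" for i
  proof -
    have "f \<in> Lp_fun (restrict_space M (Xs i)) p"
      using f part that by (intro Lp_fun_restrict_space) (auto simp: ae_partition_def)
    with T[OF that] p show ?thesis by (simp add: Lp_iso_L01_def Lp_norm_powr)
  qed
  ultimately show ?thesis by (metis (no_types, lifting) has_sum_cong)
qed

lemma surj_lp_of_pieces:
  assumes p: "1 \<le> p" and part: "ae_partition M J Xs"
    and T: "\<And>i. i \<in> J \<Longrightarrow> Lp_iso_L01 (restrict_space M (Xs i)) p (T i)"
    and G: "G \<in> lp_Lp01 J p"
  shows "\<exists>f\<in>Lp_fun M p. lp_eq J (\<lambda>i. T i f) G"
proof -
  define R where "R i = restrict_space M (Xs i)" for i
  define a where "a j = Lp_norm L01 p (G j) powr p" for j
  define K where "K = {j\<in>J. a j \<noteq> 0}"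
  have G_Lp: "G j \<in> Lp_fun L01 p" if "j \<in> J" for j using G that by (simp add: lp_Lp01_def)
  have a_summable: "a summable_on J" using G by (simp add: lp_Lp01_def a_def[abs_def])
  have K: "K \<subseteq> J" "countable K" unfolding K_def using summable_countable_real[OF a_summable] by auto
  have "\<exists>g\<in>Lp_fun (R j) p. AE t in L01. T j g t = G j t" if "j \<in> J" for j
    using T[OF that] G_Lp[OF that] unfolding Lp_iso_L01_def R_def by blast
  then have "\<forall>j\<in>J. \<exists>g. g \<in> Lp_fun (R j) p \<and> (AE t in L01. T j g t = G j t)" by blast
  then obtain ff where ff: "\<And>j. j \<in> J \<Longrightarrow> ff j \<in> Lp_fun (R j) p"
    and ff_G: "\<And>j. j \<in> J \<Longrightarrow> AE t in L01. T j (ff j) t = G j t"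
    by (metis bchoice)
  have ff_norm: "(\<integral>x. \<bar>ff j x\<bar> powr p \<partial>R j) = a j" if "j \<in> J" for j
  proof -
    have "(\<integral>x. \<bar>ff j x\<bar> powr p \<partial>R j) = Lp_norm L01 p (T j (ff j)) powr p"
      using T[OF that] ff[OF that] p by (simp add: Lp_iso_L01_def Lp_norm_powr R_def)
    also have "Lp_norm L01 p (T j (ff j)) = Lp_norm L01 p (G j)"
      using T[OF that] ff[OF that] G_Lp[OF that] ff_G[OF that]
      by (intro Lp_norm_cong_AE) (auto simp: Lp_iso_L01_def Lp_fun_def R_def)
    finally show ?thesis by (simp add: a_def)
  qed
  have "(\<lambda>j. \<integral>x. \<bar>ff j x\<bar> powr p \<partial>R j) summable_on K"
    using summable_on_subset_banach[OF a_summable K(1)] ff_norm K(1)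
    by (subst summable_on_cong) auto
  moreover have "ff j \<in> Lp_fun (R j) p" if "j \<in> K" for j using ff K(1) that by auto
  ultimately obtain f where f: "f \<in> Lp_fun M p"
    and f_K: "\<And>j. j \<in> K \<Longrightarrow> AE x in R j. f x = ff j x"
    and f_not_K: "\<And>j. j \<in> J - K \<Longrightarrow> AE x in R j. f x = 0"
    using Lp_fun_glue[OF part K, of ff p] unfolding R_def by blast
  have "AE t in L01. T j f t = G j t" if j: "j \<in> J" for j
  proof -
    have f_R: "f \<in> Lp_fun (R j) p"
      using f part j unfolding R_def by (intro Lp_fun_restrict_space) (auto simp: ae_partition_def)
    have zero: "(\<lambda>x. 0::real) \<in> Lp_fun (R j) p" by (simp add: Lp_fun_def)
    have T_j: "Lp_iso_L01 (R j) p (T j)" using T[OF j] by (simp add: R_def)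
    show ?thesis
    proof (cases "j \<in> K")
      case True
      have "AE t in L01. T j f t = T j (ff j) t"
        by (rule Lp_iso_L01_cong_AE[OF T_j p f_R ff[OF j] f_K[OF True]])
      with ff_G[OF j] show ?thesis by eventually_elim simp
    next
      case False
      have "AE t in L01. T j f t = T j (\<lambda>x. 0) t"
        using f_not_K False j by (intro Lp_iso_L01_cong_AE[OF T_j p f_R zero]) auto
      moreover have "AE t in L01. G j t = 0"
        using False j p by (intro AE_eq_0_of_Lp_norm_eq_0[OF G_Lp[OF j]]) (auto simp: K_def a_def)
      ultimately show ?thesis using Lp_iso_L01_zero[OF T[OF j]] by eventually_elim simp
    qed
  qed
  with f show ?thesis unfolding lp_eq_def by blast
qed

lemma isometric_iso_Lp_lp_of_pieces:
  assumes p: "1 \<le> p" and part: "ae_partition M J Xs"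
    and T: "\<And>i. i \<in> J \<Longrightarrow> Lp_iso_L01 (restrict_space M (Xs i)) p (T i)"
  shows "isometric_iso_Lp_lp M J p (\<lambda>f i. T i f)"
  unfolding isometric_iso_Lp_lp_def
proof (intro conjI ballI allI)
  fix f assume f: "f \<in> Lp_fun M p"
  have f_R: "f \<in> Lp_fun (restrict_space M (Xs i)) p" if "i \<in> J" for i
    using f part that by (intro Lp_fun_restrict_space) (auto simp: ae_partition_def)
  note sum = has_sum_Lp_norm_pieces[OF p part T f]
  show "(\<lambda>i. T i f) \<in> lp_Lp01 J p"
    using sum T f_R unfolding lp_Lp01_def summable_on_def Lp_iso_L01_def by blast
  show "lp_Lp01_norm J p (\<lambda>i. T i f) = Lp_norm M p f"
    using infsumI[OF sum] by (simp add: lp_Lp01_norm_def Lp_norm_def[of M])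
  fix g a b assume g: "g \<in> Lp_fun M p"
  have "AE t in L01. T j (\<lambda>x. a * f x + b * g x) t = a * T j f t + b * T j g t" if "j \<in> J" for j
  proof -
    have "g \<in> Lp_fun (restrict_space M (Xs j)) p"
      using g part that by (intro Lp_fun_restrict_space) (auto simp: ae_partition_def)
    with T[OF that] f_R[OF that] show ?thesis unfolding Lp_iso_L01_def by blast
  qed
  then show "lp_eq J (\<lambda>i. T i (\<lambda>x. a * f x + b * g x)) (\<lambda>j t. a * T j f t + b * T j g t)"
    by (simp add: lp_eq_def)
next
  fix G assume "G \<in> lp_Lp01 J p"
  with p part T show "\<exists>f\<in>Lp_fun M p. lp_eq J (\<lambda>i. T i f) G" by (rule surj_lp_of_pieces)
qed

theorem theorem4p3:
  fixes M :: "'a measure" and J :: "'i set" and Xs :: "'i \<Rightarrow> 'a set" and p :: real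
  assumes "1 \<le> p"
    and "relatively_nonatomic M"
    and "separable_partition M J Xs"
  shows "\<exists>T. isometric_iso_Lp_lp M J p T"
proof -
  have "\<exists>T. Lp_iso_L01 (restrict_space M (Xs i)) p T" if i: "i \<in> J" for i
  proof (rule Lp_iso_L01_exists[OF assms(1)])
    have Xs: "Xs i \<in> sets M" "sigma_finite_set M (Xs i)" "separable_set M (Xs i)" "emeasure M (Xs i) > 0"
      using assms(3) i by (auto simp: separable_partition_def)
    then show "sigma_finite_measure (restrict_space M (Xs i))"
      by (intro sigma_finite_measure_restrict_space)
    show "purely_nonatomic (restrict_space M (Xs i))"
      using assms(2) Xs by (simp add: relatively_nonatomic_def)
    show "Lp_separable (restrict_space M (Xs i)) p"
      using assms(1) Xs by (simp add: separable_set_def)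
    show "emeasure (restrict_space M (Xs i)) (space (restrict_space M (Xs i))) > 0"
      using Xs by (simp add: emeasure_restrict_space space_restrict_space sets.sets_into_space Int_absorb2)
  qed
  then obtain T where "\<And>i. i \<in> J \<Longrightarrow> Lp_iso_L01 (restrict_space M (Xs i)) p (T i)" by metis
  then have "isometric_iso_Lp_lp M J p (\<lambda>f i. T i f)"
    using assms(1,3) by (intro isometric_iso_Lp_lp_of_pieces ae_partition_if_separable_partition)
  then show ?thesis by blast
qed

end
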